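(* For every bipartite state $\rho$ on $\mathcal{H}^A\otimes\mathcal{H}^B$ ($\dim\mathcal{H}^A=m$, $\dim\mathcal{H}^B=n$), the geometric discord satisfies $$D_G(\rho)=\frac{2}{m^2n}\Big[\mathrm{Tr}\,G-\max_{\{|k\rangle\}}\sum_{k=1}^m\vec{\mu}_k^{\mathrm t}G\vec{\mu}_k\Big],$$ where $G=\vec{x}\vec{x}^{\mathrm t}+\frac{2}{n}TT^{\mathrm t}$, the maximum is over all orthonormal bases $\{|k\rangle\}_{k=1}^m$ of $\mathcal{H}^A$, and $\vec{\mu}_k=\frac{\sqrt2}{m}\vec{\alpha}_k$ with $\vec{\alpha}_k\in\mathbb{R}^{m^2-1}$ the coherence vector of $|k\rangle\langle k|$, i.e. $|k\rangle\langle k|=\frac1m(\mathbb{I}+\vec{\alpha}_k\cdot\hat\lambda^A)$. In particular $D_G$ does not depend on the coherence vector $\vec{y}$ of $B$.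
   Context: Generators $\hat\lambda_i^A$ ($i=1,\dots,m^2-1$) of $SU(m)$ and $\hat\lambda_j^B$ of $SU(n)$ are Hermitian, traceless, with $\mathrm{Tr}(\hat\lambda_i\hat\lambda_j)=2\delta_{ij}$. For $\rho$, $x_i=\frac{m}{2}\mathrm{Tr}[(\hat\lambda_i^A\otimes\mathbb{I})\rho]$, $y_j=\frac{n}{2}\mathrm{Tr}[(\mathbb{I}\otimes\hat\lambda_j^B)\rho]$, $t_{ij}=\frac{mn}{4}\mathrm{Tr}[(\hat\lambda_i^A\otimes\hat\lambda_j^B)\rho]$, $T=(t_{ij})$. The geometric discord is $D_G(\rho)=\min_\chi\mathrm{Tr}(\rho-\chi)^2$ over zero-discord states $\chi=\sum_{k=1}^m p_k|k\rangle\langle k|\otimes\rho_k^B$ ($\{|k\rangle\}$ orthonormal basis of $\mathcal{H}^A$, $p_k$ probabilities, $\rho_k^B$ states on $\mathcal{H}^B$). *)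

theory Defs
  imports "Jordan_Normal_Form.Matrix"
begin

text \<open>Matrices are Jordan_Normal_Form complex matrices. Bipartite index convention:
  basis vector |a> (x) |b> of C^m (x) C^n has index a*n+b (Kronecker product).\<close>

definition kron :: "complex mat \<Rightarrow> complex mat \<Rightarrow> complex mat" where
  "kron A B = mat (dim_row A * dim_row B) (dim_col A * dim_col B)
     (\<lambda>(i,j). A $$ (i div dim_row B, j div dim_col B) * B $$ (i mod dim_row B, j mod dim_col B))"

definition mtrace :: "complex mat \<Rightarrow> complex" where
  "mtrace A = (\<Sum>i<dim_row A. A $$ (i,i))"

definition hermitian_mat :: "nat \<Rightarrow> complex mat \<Rightarrow> bool" where
  "hermitian_mat d A \<longleftrightarrow> A \<in> carrier_mat d d \<and> (\<forall>i<d. \<forall>j<d. A $$ (i,j) = cnj (A $$ (j,i)))"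

definition density_mat :: "nat \<Rightarrow> complex mat \<Rightarrow> bool" where
  "density_mat d A \<longleftrightarrow> hermitian_mat d A
     \<and> (\<forall>v \<in> carrier_vec d. 0 \<le> Re (\<Sum>i<d. \<Sum>j<d. cnj (v $ i) * A $$ (i,j) * v $ j))
     \<and> mtrace A = 1"

definition su_generators :: "nat \<Rightarrow> (nat \<Rightarrow> complex mat) \<Rightarrow> bool" where
  "su_generators d lam \<longleftrightarrow>
     (\<forall>i < d^2 - 1. hermitian_mat d (lam i) \<and> mtrace (lam i) = 0)
     \<and> (\<forall>i < d^2 - 1. \<forall>j < d^2 - 1. mtrace (lam i * lam j) = (if i = j then 2 else 0))"

definition onb :: "nat \<Rightarrow> (nat \<Rightarrow> complex vec) \<Rightarrow> bool" where
  "onb d e \<longleftrightarrow> (\<forall>k<d. e k \<in> carrier_vec d)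
     \<and> (\<forall>k<d. \<forall>l<d. (\<Sum>i<d. cnj (e k $ i) * e l $ i) = (if k = l then 1 else 0))"

definition proj :: "complex vec \<Rightarrow> complex mat" where
  "proj v = mat (dim_vec v) (dim_vec v) (\<lambda>(i,j). v $ i * cnj (v $ j))"

definition zero_discord :: "nat \<Rightarrow> nat \<Rightarrow> complex mat \<Rightarrow> bool" where
  "zero_discord m n \<chi> \<longleftrightarrow> (\<exists>e p rB. onb m e \<and> (\<forall>k<m. 0 \<le> p k) \<and> (\<Sum>k<m. p k) = 1
      \<and> (\<forall>k<m. density_mat n (rB k))
      \<and> \<chi> = mat (m*n) (m*n) (\<lambda>ij. \<Sum>k<m. complex_of_real (p k) * kron (proj (e k)) (rB k) $$ ij))"

definition geometric_discord :: "nat \<Rightarrow> nat \<Rightarrow> complex mat \<Rightarrow> real" where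
  "geometric_discord m n \<rho> = Inf {Re (mtrace ((\<rho> - \<chi>) * (\<rho> - \<chi>))) | \<chi>. zero_discord m n \<chi>}"

definition xvec :: "nat \<Rightarrow> nat \<Rightarrow> (nat \<Rightarrow> complex mat) \<Rightarrow> complex mat \<Rightarrow> nat \<Rightarrow> real" where
  "xvec m n lamA \<rho> i = real m / 2 * Re (mtrace (kron (lamA i) (1\<^sub>m n) * \<rho>))"

definition yvec :: "nat \<Rightarrow> nat \<Rightarrow> (nat \<Rightarrow> complex mat) \<Rightarrow> complex mat \<Rightarrow> nat \<Rightarrow> real" where
  "yvec m n lamB \<rho> j = real n / 2 * Re (mtrace (kron (1\<^sub>m m) (lamB j) * \<rho>))"

definition tmat :: "nat \<Rightarrow> nat \<Rightarrow> (nat \<Rightarrow> complex mat) \<Rightarrow> (nat \<Rightarrow> complex mat) \<Rightarrow> complex mat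
    \<Rightarrow> nat \<Rightarrow> nat \<Rightarrow> real" where
  "tmat m n lamA lamB \<rho> i j = real (m * n) / 4 * Re (mtrace (kron (lamA i) (lamB j) * \<rho>))"

definition Gmat :: "nat \<Rightarrow> nat \<Rightarrow> (nat \<Rightarrow> complex mat) \<Rightarrow> (nat \<Rightarrow> complex mat) \<Rightarrow> complex mat
    \<Rightarrow> nat \<Rightarrow> nat \<Rightarrow> real" where
  "Gmat m n lamA lamB \<rho> i i' = xvec m n lamA \<rho> i * xvec m n lamA \<rho> i'
     + 2 / real n * (\<Sum>j < n^2 - 1. tmat m n lamA lamB \<rho> i j * tmat m n lamA lamB \<rho> i' j)"

text \<open>Coherence vector alpha of a state P on C^d: P = (1/d)(I + sum_i alpha_i lam_i), whose
  coordinates (lam orthonormal w.r.t. Tr(A B)/2) are alpha_i = (d/2) Tr(lam_i P).\<close>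
definition coherence_vec :: "nat \<Rightarrow> (nat \<Rightarrow> complex mat) \<Rightarrow> complex mat \<Rightarrow> nat \<Rightarrow> real" where
  "coherence_vec d lam P i = real d / 2 * Re (mtrace (lam i * P))"

definition mu_vec :: "nat \<Rightarrow> (nat \<Rightarrow> complex mat) \<Rightarrow> complex vec \<Rightarrow> nat \<Rightarrow> real" where
  "mu_vec m lamA v i = sqrt 2 / real m * coherence_vec m lamA (proj v) i"

end

theory Submission
  imports Defs "Jordan_Normal_Form.Determinant"
begin

text \<open>Write \<open>r\<^sub>k = Tr\<^sub>A ((|k\<rangle>\<langle>k| \<otimes> I) \<rho>)\<close> for the unnormalised states of \<open>B\<close> conditioned on
  the outcomes of measuring \<open>A\<close> in a basis \<open>{|k\<rangle>}\<close>. For a classical-quantum state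
  \<open>\<chi> = \<Sum>\<^sub>k p\<^sub>k |k\<rangle>\<langle>k| \<otimes> \<sigma>\<^sub>k\<close> one has
  \<open>Tr (\<rho> - \<chi>)\<^sup>2 = Tr \<rho>\<^sup>2 - \<Sum>\<^sub>k Tr r\<^sub>k\<^sup>2 + \<Sum>\<^sub>k Tr (r\<^sub>k - p\<^sub>k \<sigma>\<^sub>k)\<^sup>2\<close>, so for a fixed basis the
  optimum is \<open>p\<^sub>k \<sigma>\<^sub>k = r\<^sub>k\<close> and \<open>D\<^sub>G = Tr \<rho>\<^sup>2 - max \<Sum>\<^sub>k Tr r\<^sub>k\<^sup>2\<close>.
  The completeness relation
  \<open>\<Sum>\<^sub>i (\<lambda>\<^sub>i)\<^sub>a\<^sub>c (\<lambda>\<^sub>i)\<^sub>b\<^sub>e = 2 \<delta>\<^sub>a\<^sub>e \<delta>\<^sub>c\<^sub>b - (2/d) \<delta>\<^sub>a\<^sub>c \<delta>\<^sub>b\<^sub>e\<close> of the generators turns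
  \<open>Tr G\<close> into \<open>(m\<^sup>2n/4) (2 Tr \<rho>\<^sup>2 - (2/m) Tr \<rho>\<^sub>B\<^sup>2)\<close> and \<open>\<mu>\<^sub>k\<^sup>t G \<mu>\<^sub>k\<close> into
  \<open>(m\<^sup>2n/2) Tr (r\<^sub>k - \<rho>\<^sub>B/m)\<^sup>2\<close>; since \<open>\<Sum>\<^sub>k r\<^sub>k = \<rho>\<^sub>B\<close>, the difference is
  \<open>(m\<^sup>2n/2) (Tr \<rho>\<^sup>2 - \<Sum>\<^sub>k Tr r\<^sub>k\<^sup>2)\<close>.\<close>

section \<open>The trace pairing and positivity of entry functions\<close>

lemma sum_lessThan_mult:
  fixes m n :: nat
  shows "(\<Sum>i<m*n. f i) = (\<Sum>a<m. \<Sum>b<n. f (a*n+b))"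
proof -
  have "(\<Sum>i<m*n. f i) = (\<Sum>a<m. \<Sum>i\<in>{a*n..<a*n+n}. f i)"
    using sum.nat_group[of f n m] by simp
  also have "\<dots> = (\<Sum>a<m. \<Sum>b<n. f (a*n+b))"
  proof (rule sum.cong[OF refl])
    fix a
    show "(\<Sum>i\<in>{a*n..<a*n+n}. f i) = (\<Sum>b<n. f (a*n+b))"
      by (rule sum.reindex_bij_witness[of _ "\<lambda>b. a*n+b" "\<lambda>i. i - a*n"]) auto
  qed
  finally show ?thesis .
qed

lemma sum_swap4:
  "(\<Sum>a\<in>A. \<Sum>b\<in>B. \<Sum>c\<in>C. \<Sum>d\<in>D. f a b c d) = (\<Sum>b\<in>B. \<Sum>d\<in>D. \<Sum>a\<in>A. \<Sum>c\<in>C. f a b c d)"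
proof -
  have "(\<Sum>a\<in>A. \<Sum>b\<in>B. \<Sum>c\<in>C. \<Sum>d\<in>D. f a b c d) = (\<Sum>b\<in>B. \<Sum>a\<in>A. \<Sum>c\<in>C. \<Sum>d\<in>D. f a b c d)"
    by (rule sum.swap)
  also have "\<dots> = (\<Sum>b\<in>B. \<Sum>a\<in>A. \<Sum>d\<in>D. \<Sum>c\<in>C. f a b c d)"
    by (rule sum.cong[OF refl], rule sum.cong[OF refl], rule sum.swap)
  also have "\<dots> = (\<Sum>b\<in>B. \<Sum>d\<in>D. \<Sum>a\<in>A. \<Sum>c\<in>C. f a b c d)"
    by (rule sum.cong[OF refl], rule sum.swap)
  finally show ?thesis .
qed

lemma mult_index_less:
  fixes a b m n :: nat
  assumes "a < m" "b < n"
  shows "a*n+b < m*n"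
proof -
  have "a*n+b < (a+1)*n" using assms(2) by simp
  also have "\<dots> \<le> m*n" using assms(1) by (intro mult_right_mono) auto
  finally show ?thesis .
qed

text \<open>Square matrices are handled through their entry functions on \<open>{..<n} \<times> {..<n}\<close>;
  a matrix \<open>A\<close> enters as \<open>curry (($$) A)\<close>.\<close>

definition tr_prod :: "nat \<Rightarrow> (nat \<Rightarrow> nat \<Rightarrow> complex) \<Rightarrow> (nat \<Rightarrow> nat \<Rightarrow> complex) \<Rightarrow> complex" where
  "tr_prod n X Y = (\<Sum>b<n. \<Sum>d<n. X b d * Y d b)"

definition ftrace :: "nat \<Rightarrow> (nat \<Rightarrow> nat \<Rightarrow> complex) \<Rightarrow> complex" where
  "ftrace n X = (\<Sum>b<n. X b b)"

definition herm_fun :: "nat \<Rightarrow> (nat \<Rightarrow> nat \<Rightarrow> complex) \<Rightarrow> bool" where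
  "herm_fun n X \<longleftrightarrow> (\<forall>b<n. \<forall>d<n. X d b = cnj (X b d))"

definition quad_form :: "nat \<Rightarrow> (nat \<Rightarrow> nat \<Rightarrow> complex) \<Rightarrow> (nat \<Rightarrow> complex) \<Rightarrow> complex" where
  "quad_form n X w = (\<Sum>b<n. \<Sum>d<n. cnj (w b) * X b d * w d)"

definition psd_fun :: "nat \<Rightarrow> (nat \<Rightarrow> nat \<Rightarrow> complex) \<Rightarrow> bool" where
  "psd_fun n X \<longleftrightarrow> (\<forall>w. 0 \<le> Re (quad_form n X w))"

lemma tr_prod_commute: "tr_prod n X Y = tr_prod n Y X"
  unfolding tr_prod_def by (subst sum.swap) (simp add: mult.commute)

lemma tr_prod_cong:
  assumes "\<And>b d. b < n \<Longrightarrow> d < n \<Longrightarrow> X b d = X' b d"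
    and "\<And>b d. b < n \<Longrightarrow> d < n \<Longrightarrow> Y b d = Y' b d"
  shows "tr_prod n X Y = tr_prod n X' Y'"
  unfolding tr_prod_def using assms by (intro sum.cong refl) auto

lemma tr_prod_sum_left:
  "tr_prod n (\<lambda>b d. \<Sum>k\<in>K. c k * X k b d) Y = (\<Sum>k\<in>K. c k * tr_prod n (X k) Y)"
proof -
  have "tr_prod n (\<lambda>b d. \<Sum>k\<in>K. c k * X k b d) Y = (\<Sum>b<n. \<Sum>d<n. \<Sum>k\<in>K. c k * (X k b d * Y d b))"
    unfolding tr_prod_def by (simp add: sum_distrib_right mult.assoc)
  also have "\<dots> = (\<Sum>b<n. \<Sum>k\<in>K. \<Sum>d<n. c k * (X k b d * Y d b))"
    by (intro sum.cong refl sum.swap)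
  also have "\<dots> = (\<Sum>k\<in>K. c k * tr_prod n (X k) Y)"
    unfolding tr_prod_def sum_distrib_left by (rule sum.swap)
  finally show ?thesis .
qed

lemma tr_prod_sum_right:
  "(\<Sum>k\<in>K. tr_prod n X (Y k)) = tr_prod n X (\<lambda>b d. \<Sum>k\<in>K. Y k b d)"
  using tr_prod_sum_left[where c = "\<lambda>_. 1" and X = Y and Y = X] by (simp add: tr_prod_commute)

lemma tr_prod_scale:
  "tr_prod n (\<lambda>b d. c * X b d) (\<lambda>b d. c' * Y b d) = c * c' * tr_prod n X Y"
  unfolding tr_prod_def by (simp add: sum_distrib_left mult_ac)

lemma tr_prod_bilinear:
  "(\<Sum>i\<in>I. \<Sum>i'\<in>I. u i * u i' * tr_prod n (X i) (X i')) =
   tr_prod n (\<lambda>b d. \<Sum>i\<in>I. u i * X i b d) (\<lambda>b d. \<Sum>i\<in>I. u i * X i b d)"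
  (is "_ = tr_prod n ?S ?S")
proof -
  have "tr_prod n (X i) ?S = (\<Sum>i'\<in>I. u i' * tr_prod n (X i) (X i'))" for i
  proof -
    have "tr_prod n (X i) ?S = (\<Sum>i'\<in>I. u i' * tr_prod n (X i') (X i))"
      by (subst tr_prod_commute) (rule tr_prod_sum_left)
    also have "\<dots> = (\<Sum>i'\<in>I. u i' * tr_prod n (X i) (X i'))"
      by (intro sum.cong refl arg_cong2[where f = "(*)"] tr_prod_commute)
    finally show ?thesis .
  qed
  then have "tr_prod n ?S ?S = (\<Sum>i\<in>I. u i * (\<Sum>i'\<in>I. u i' * tr_prod n (X i) (X i')))"
    by (simp add: tr_prod_sum_left)
  then show ?thesis by (simp add: sum_distrib_left mult.assoc)
qed

lemma tr_prod_diff_square: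
  "tr_prod n (\<lambda>b d. X b d - c * Y b d) (\<lambda>b d. X b d - c * Y b d)
     = tr_prod n X X - 2 * c * tr_prod n Y X + c\<^sup>2 * tr_prod n Y Y"
proof -
  have "tr_prod n (\<lambda>b d. X b d - c * Y b d) (\<lambda>b d. X b d - c * Y b d)
      = (\<Sum>b<n. \<Sum>d<n. X b d * X d b - c * (X b d * Y d b) - c * (Y b d * X d b)
                          + c\<^sup>2 * (Y b d * Y d b))"
    unfolding tr_prod_def by (intro sum.cong refl) (simp add: algebra_simps power2_eq_square)
  also have "\<dots> = tr_prod n X X - c * tr_prod n X Y - c * tr_prod n Y X + c\<^sup>2 * tr_prod n Y Y"
    unfolding tr_prod_def by (simp only: sum.distrib sum_subtractf sum_distrib_left)
  finally show ?thesis using tr_prod_commute[of n X Y] by simp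
qed

lemma tr_prod_self_nonneg:
  assumes "herm_fun n X"
  shows "0 \<le> Re (tr_prod n X X)"
proof -
  have "tr_prod n X X = (\<Sum>b<n. \<Sum>d<n. X b d * cnj (X b d))"
    unfolding tr_prod_def
  proof (intro sum.cong refl)
    fix b d assume "b \<in> {..<n}" "d \<in> {..<n}"
    then have "X d b = cnj (X b d)" using assms unfolding herm_fun_def by blast
    then show "X b d * X d b = X b d * cnj (X b d)" by simp
  qed
  also have "Re \<dots> = (\<Sum>b<n. \<Sum>d<n. (Re (X b d))\<^sup>2 + (Im (X b d))\<^sup>2)"
    by (simp add: complex_mult_cnj)
  finally show ?thesis by (simp add: sum_nonneg)
qed

lemma tr_prod_herm_real:
  assumes "herm_fun n X" "herm_fun n Y"
  shows "complex_of_real (Re (tr_prod n X Y)) = tr_prod n X Y"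
proof -
  have "cnj (tr_prod n X Y) = tr_prod n Y X"
    unfolding tr_prod_def cnj_sum
  proof (intro sum.cong refl)
    fix b d assume "b \<in> {..<n}" "d \<in> {..<n}"
    then have "X d b = cnj (X b d)" "Y b d = cnj (Y d b)" using assms unfolding herm_fun_def by blast+
    then show "cnj (X b d * Y d b) = Y b d * X d b" by (simp add: mult.commute)
  qed
  then have "cnj (tr_prod n X Y) = tr_prod n X Y" by (simp add: tr_prod_commute)
  then have "tr_prod n X Y \<in> \<real>" by (simp add: Reals_cnj_iff)
  then show ?thesis by simp
qed

lemma mtrace_mult_tr_prod:
  assumes "A \<in> carrier_mat N N" "B \<in> carrier_mat N N"
  shows "mtrace (A * B) = tr_prod N (curry (($$) A)) (curry (($$) B))"
  using assms by (auto simp: mtrace_def tr_prod_def scalar_prod_def atLeast0LessThan intro!: sum.cong)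

lemma herm_fun_hermitian_mat: "hermitian_mat N A \<Longrightarrow> herm_fun N (curry (($$) A))"
  unfolding hermitian_mat_def herm_fun_def curry_conv by blast

lemma mtrace_mult_hermitian_real:
  assumes "hermitian_mat N A" "hermitian_mat N B"
  shows "complex_of_real (Re (mtrace (A * B))) = mtrace (A * B)"
proof -
  have "A \<in> carrier_mat N N" "B \<in> carrier_mat N N" using assms unfolding hermitian_mat_def by blast+
  then show ?thesis
    using tr_prod_herm_real[OF herm_fun_hermitian_mat herm_fun_hermitian_mat, OF assms]
    by (simp add: mtrace_mult_tr_prod)
qed

lemma tr_prod_one_left: "tr_prod n (curry (($$) (1\<^sub>m n))) Y = ftrace n Y"
  unfolding tr_prod_def ftrace_def
proof (rule sum.cong[OF refl])
  fix b assume "b \<in> {..<n}"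
  then have "(\<Sum>d<n. curry (($$) (1\<^sub>m n)) b d * Y d b) = (\<Sum>d<n. if b = d then Y d b else 0)"
    by (intro sum.cong refl) auto
  then show "(\<Sum>d<n. curry (($$) (1\<^sub>m n)) b d * Y d b) = Y b b"
    using \<open>b \<in> {..<n}\<close> by simp
qed

lemma hermitian_one_mat: "hermitian_mat n (1\<^sub>m n)"
  unfolding hermitian_mat_def by auto

lemma quad_form_supported:
  assumes "S \<subseteq> {..<n}" "\<And>y. y \<notin> S \<Longrightarrow> w y = 0"
  shows "quad_form n X w = (\<Sum>b\<in>S. \<Sum>d\<in>S. cnj (w b) * X b d * w d)"
proof -
  have "finite S" using assms(1) finite_subset by blast
  have "(\<Sum>d<n. cnj (w b) * X b d * w d) = (\<Sum>d\<in>S. cnj (w b) * X b d * w d)" for b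
    using assms by (intro sum.mono_neutral_right) auto
  then have "quad_form n X w = (\<Sum>b<n. \<Sum>d\<in>S. cnj (w b) * X b d * w d)"
    unfolding quad_form_def by simp
  also have "\<dots> = (\<Sum>b\<in>S. \<Sum>d\<in>S. cnj (w b) * X b d * w d)"
    using assms \<open>finite S\<close> by (intro sum.mono_neutral_right) auto
  finally show ?thesis .
qed

lemma psd_diag_nonneg:
  assumes "psd_fun n X" "u < n"
  shows "0 \<le> Re (X u u)"
proof -
  have "quad_form n X (\<lambda>y. of_bool (y = u)) = X u u"
    using assms(2) by (subst quad_form_supported[where S = "{u}"]) auto
  then show ?thesis using assms(1) unfolding psd_fun_def by metis
qed

lemma psd_trace_zero_imp_zero:
  assumes herm: "herm_fun n X" and psd: "psd_fun n X" and tr: "ftrace n X = 0"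
    and "b < n" "d < n"
  shows "X b d = 0"
proof -
  have diag: "X u u = 0" if "u < n" for u
  proof -
    have "(\<Sum>u<n. Re (X u u)) = 0" using tr unfolding ftrace_def by (metis Re_sum zero_complex.sel(1))
    then have "Re (X u u) = 0" using psd_diag_nonneg[OF psd] that
      by (subst (asm) sum_nonneg_eq_0_iff) auto
    moreover have "Im (X u u) = 0"
      using herm that unfolding herm_fun_def by (metis complex_is_Real_iff Reals_cnj_iff)
    ultimately show ?thesis by (simp add: complex_eq_iff)
  qed
  show ?thesis
  proof (cases "b = d")
    case True then show ?thesis using diag \<open>d < n\<close> by simp
  next
    case False
    define z where "z = X b d"
    \<comment> \<open>testing \<open>X\<close> against \<open>e\<^sub>b - cnj z \<cdot> e\<^sub>d\<close> gives \<open>-2 |z|\<^sup>2\<close>\<close>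
    define w where "w y = (if y = b then 1 else if y = d then - cnj z else 0)" for y
    have "X d b = cnj z" using herm \<open>b < n\<close> \<open>d < n\<close> unfolding herm_fun_def z_def by blast
    then have "quad_form n X w = - 2 * (z * cnj z)"
      using False \<open>b < n\<close> \<open>d < n\<close> diag
      by (subst quad_form_supported[where S = "{b, d}"]) (auto simp: w_def z_def)
    then have "0 \<le> Re (- 2 * (z * cnj z))" using psd unfolding psd_fun_def by metis
    then have "(Re z)\<^sup>2 + (Im z)\<^sup>2 \<le> 0" by (simp add: complex_mult_cnj)
    then show ?thesis by (simp add: z_def complex_eq_iff sum_power2_le_zero_iff)
  qed
qed
section \<open>Kronecker products and the partial trace\<close>

lemma dim_kron [simp]:
  "dim_row (kron A B) = dim_row A * dim_row B" "dim_col (kron A B) = dim_col A * dim_col B"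
  by (auto simp: kron_def)

lemma kron_carrier_mat:
  "A \<in> carrier_mat m m \<Longrightarrow> B \<in> carrier_mat n n \<Longrightarrow> kron A B \<in> carrier_mat (m*n) (m*n)"
  by auto

lemma kron_index:
  assumes "A \<in> carrier_mat m m" "B \<in> carrier_mat n n" "a < m" "b < n" "c < m" "d < n"
  shows "kron A B $$ (a*n+b, c*n+d) = A $$ (a,c) * B $$ (b,d)"
  using assms mult_index_less[of a m b n] mult_index_less[of c m d n] by (auto simp: kron_def)

lemma hermitian_kron:
  assumes A: "hermitian_mat m A" and B: "hermitian_mat n B"
  shows "hermitian_mat (m*n) (kron A B)"
proof -
  have cA: "A \<in> carrier_mat m m" and cB: "B \<in> carrier_mat n n"
    using A B unfolding hermitian_mat_def by blast+
  have "kron A B $$ (i,j) = cnj (kron A B $$ (j,i))" if "i < m*n" "j < m*n" for i j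
  proof -
    have "0 < n" using that by (cases n) auto
    then have lt: "i div n < m" "j div n < m" "i mod n < n" "j mod n < n"
      using that by (auto simp: less_mult_imp_div_less)
    then have "A $$ (i div n, j div n) = cnj (A $$ (j div n, i div n))"
      "B $$ (i mod n, j mod n) = cnj (B $$ (j mod n, i mod n))"
      using A B unfolding hermitian_mat_def by blast+
    then show ?thesis using that cA cB unfolding kron_def
      by (simp only: index_mat dim_row_mat dim_col_mat carrier_matD split complex_cnj_mult)
  qed
  then show ?thesis unfolding hermitian_mat_def using cA cB by (auto simp: kron_def)
qed

text \<open>\<open>ptrace_A m n \<rho> M\<close> is the operator \<open>Tr\<^sub>A ((M \<otimes> I) \<rho>)\<close> on the second factor.\<close>

definition ptrace_A :: "nat \<Rightarrow> nat \<Rightarrow> complex mat \<Rightarrow> (nat \<Rightarrow> nat \<Rightarrow> complex) \<Rightarrow> nat \<Rightarrow> nat \<Rightarrow> complex" where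
  "ptrace_A m n \<rho> M b d = tr_prod m M (\<lambda>c a. \<rho> $$ (c*n+b, a*n+d))"

lemma ptrace_A_cong:
  "(\<And>a c. a < m \<Longrightarrow> c < m \<Longrightarrow> M a c = M' a c) \<Longrightarrow> ptrace_A m n \<rho> M b d = ptrace_A m n \<rho> M' b d"
  unfolding ptrace_A_def by (rule tr_prod_cong) auto

lemma ptrace_A_sum:
  "ptrace_A m n \<rho> (\<lambda>a c. \<Sum>k\<in>K. M k a c) b d = (\<Sum>k\<in>K. ptrace_A m n \<rho> (M k) b d)"
  unfolding ptrace_A_def using tr_prod_sum_left[where c = "\<lambda>_. 1" and X = M] by simp

lemma herm_fun_ptrace_A:
  assumes \<rho>: "herm_fun (m*n) (curry (($$) \<rho>))" and M: "herm_fun m M"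
  shows "herm_fun n (ptrace_A m n \<rho> M)"
proof -
  have "cnj (ptrace_A m n \<rho> M b d) = ptrace_A m n \<rho> M d b" if "b < n" "d < n" for b d
  proof -
    have "cnj (ptrace_A m n \<rho> M b d) = (\<Sum>a<m. \<Sum>c<m. M c a * \<rho> $$ (a*n+d, c*n+b))"
      unfolding ptrace_A_def tr_prod_def cnj_sum complex_cnj_mult
    proof (intro sum.cong refl)
      fix a c assume "a \<in> {..<m}" "c \<in> {..<m}"
      moreover have "a*n+d < m*n" "c*n+b < m*n" using that calculation by (simp_all add: mult_index_less)
      ultimately have "M c a = cnj (M a c)" "\<rho> $$ (a*n+d, c*n+b) = cnj (\<rho> $$ (c*n+b, a*n+d))"
        using M \<rho> unfolding herm_fun_def curry_conv by blast+
      then show "cnj (M a c) * cnj (\<rho> $$ (c*n+b, a*n+d)) = M c a * \<rho> $$ (a*n+d, c*n+b)"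
        by simp
    qed
    also have "\<dots> = ptrace_A m n \<rho> M d b"
      unfolding ptrace_A_def tr_prod_def by (rule sum.swap)
    finally show ?thesis .
  qed
  then show ?thesis unfolding herm_fun_def by (metis complex_cnj_cnj)
qed

lemma tr_prod_kron_ptrace_A:
  assumes A: "A \<in> carrier_mat m m" and B: "B \<in> carrier_mat n n"
  shows "tr_prod (m*n) (curry (($$) (kron A B))) (curry (($$) \<rho>))
       = tr_prod n (curry (($$) B)) (ptrace_A m n \<rho> (curry (($$) A)))"
proof -
  have "tr_prod (m*n) (curry (($$) (kron A B))) (curry (($$) \<rho>))
      = (\<Sum>a<m. \<Sum>b<n. \<Sum>c<m. \<Sum>d<n. A $$ (a,c) * B $$ (b,d) * \<rho> $$ (c*n+d, a*n+b))"
    unfolding tr_prod_def sum_lessThan_mult by (intro sum.cong refl) (simp add: kron_index[OF A B])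
  also have "\<dots> = (\<Sum>b<n. \<Sum>d<n. \<Sum>a<m. \<Sum>c<m. A $$ (a,c) * B $$ (b,d) * \<rho> $$ (c*n+d, a*n+b))"
    by (rule sum_swap4)
  also have "\<dots> = tr_prod n (curry (($$) B)) (ptrace_A m n \<rho> (curry (($$) A)))"
    unfolding ptrace_A_def tr_prod_def by (simp add: sum_distrib_left mult_ac)
  finally show ?thesis .
qed

lemma tr_prod_kron:
  assumes "A \<in> carrier_mat m m" "A' \<in> carrier_mat m m" "B \<in> carrier_mat n n" "B' \<in> carrier_mat n n"
  shows "tr_prod (m*n) (curry (($$) (kron A B))) (curry (($$) (kron A' B')))
       = tr_prod m (curry (($$) A)) (curry (($$) A')) * tr_prod n (curry (($$) B)) (curry (($$) B'))"
  unfolding tr_prod_def sum_lessThan_mult sum_product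
  by (intro sum.cong refl) (simp add: kron_index[OF assms(1,3)] kron_index[OF assms(2,4)] mult_ac)

section \<open>Orthonormal bases and projectors\<close>

lemma orthonormal_cols_imp_rows:
  fixes U :: "nat \<Rightarrow> nat \<Rightarrow> complex"
  assumes "\<And>\<alpha> \<beta>. \<alpha> < N \<Longrightarrow> \<beta> < N \<Longrightarrow> (\<Sum>p<N. cnj (U p \<alpha>) * U p \<beta>) = (if \<alpha> = \<beta> then 1 else 0)"
    and "p < N" "q < N"
  shows "(\<Sum>\<alpha><N. U p \<alpha> * cnj (U q \<alpha>)) = (if p = q then 1 else 0)"
proof -
  define A where "A = mat N N (\<lambda>(\<alpha>,p). cnj (U p \<alpha>))"
  define B where "B = mat N N (\<lambda>(p,\<beta>). U p \<beta>)"
  have "A * B = 1\<^sub>m N"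
    by (rule eq_matI) (auto simp: A_def B_def scalar_prod_def assms(1) atLeast0LessThan)
  then have "B * A = 1\<^sub>m N"
    by (rule mat_mult_left_right_inverse[rotated 2]) (auto simp: A_def B_def)
  then have "(B * A) $$ (p,q) = 1\<^sub>m N $$ (p,q)" by simp
  then show ?thesis using assms(2,3)
    by (simp add: A_def B_def scalar_prod_def atLeast0LessThan mult.commute)
qed

lemma onb_vec_carrier: "onb m e \<Longrightarrow> k < m \<Longrightarrow> e k \<in> carrier_vec m"
  unfolding onb_def by blast

lemma onb_orthonormal:
  "onb m e \<Longrightarrow> k < m \<Longrightarrow> l < m \<Longrightarrow> (\<Sum>i<m. cnj (e k $ i) * e l $ i) = (if k = l then 1 else 0)"
  unfolding onb_def by simp

lemma onb_completeness:
  assumes "onb m e" "a < m" "c < m"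
  shows "(\<Sum>k<m. e k $ a * cnj (e k $ c)) = (if a = c then 1 else 0)"
  using orthonormal_cols_imp_rows[where U = "\<lambda>p \<alpha>. e \<alpha> $ p", OF onb_orthonormal[OF assms(1)]] assms(2,3)
  by simp

lemma onb_unit_vec: "onb m (unit_vec m)"
proof -
  have "(\<Sum>i<m. cnj (unit_vec m k $ i) * unit_vec m l $ i) = (if k = l then 1 else 0)"
    if "k < m" "l < m" for k l
  proof -
    have "(\<Sum>i<m. cnj (unit_vec m k $ i) * unit_vec m l $ i)
        = (\<Sum>i<m. if i = k then (if k = l then 1 else 0) else 0)"
      by (intro sum.cong refl) (auto simp: unit_vec_def)
    then show ?thesis using that by simp
  qed
  then show ?thesis unfolding onb_def by simp
qed

lemma proj_carrier_mat: "dim_vec v = m \<Longrightarrow> proj v \<in> carrier_mat m m"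
  unfolding proj_def by simp

lemma hermitian_proj: "dim_vec v = m \<Longrightarrow> hermitian_mat m (proj v)"
  unfolding hermitian_mat_def proj_def by auto

lemma tr_prod_proj_onb:
  assumes e: "onb m e" and "k < m" "l < m"
  shows "tr_prod m (curry (($$) (proj (e k)))) (curry (($$) (proj (e l)))) = (if k = l then 1 else 0)"
proof -
  have "tr_prod m (curry (($$) (proj (e k)))) (curry (($$) (proj (e l))))
      = (\<Sum>a<m. cnj (e l $ a) * e k $ a) * (\<Sum>c<m. cnj (e k $ c) * e l $ c)"
    unfolding tr_prod_def sum_product
    using carrier_vecD[OF onb_vec_carrier[OF e assms(2)]] carrier_vecD[OF onb_vec_carrier[OF e assms(3)]]
    by (intro sum.cong refl) (simp add: proj_def mult_ac)
  then show ?thesis using onb_orthonormal[OF e] assms(2,3) by auto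
qed
lemma ftrace_proj_onb:
  assumes e: "onb m e" and "k < m"
  shows "ftrace m (curry (($$) (proj (e k)))) = 1"
  using onb_orthonormal[OF e assms(2) assms(2)] carrier_vecD[OF onb_vec_carrier[OF e assms(2)]]
  unfolding ftrace_def proj_def by (simp add: mult.commute)

section \<open>Completeness of the generators\<close>

lemma su_generators_hermitian: "su_generators d lam \<Longrightarrow> i < d\<^sup>2 - 1 \<Longrightarrow> hermitian_mat d (lam i)"
  unfolding su_generators_def by blast

lemma su_generators_carrier: "su_generators d lam \<Longrightarrow> i < d\<^sup>2 - 1 \<Longrightarrow> lam i \<in> carrier_mat d d"
  using su_generators_hermitian unfolding hermitian_mat_def by blast

lemma su_generators_traceless:
  "su_generators d lam \<Longrightarrow> i < d\<^sup>2 - 1 \<Longrightarrow> ftrace d (curry (($$) (lam i))) = 0"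
  using su_generators_carrier[of d lam i] unfolding su_generators_def mtrace_def ftrace_def by auto

lemma su_generators_orthogonal:
  "su_generators d lam \<Longrightarrow> i < d\<^sup>2 - 1 \<Longrightarrow> j < d\<^sup>2 - 1 \<Longrightarrow>
     tr_prod d (curry (($$) (lam i))) (curry (($$) (lam j))) = (if i = j then 2 else 0)"
  by (metis (no_types, lifting) mtrace_mult_tr_prod su_generators_carrier su_generators_def)

text \<open>\<open>su_basis d lam\<close> is the Hilbert-Schmidt orthonormal system \<open>I/\<surd>d, lam 0/\<surd>2, lam 1/\<surd>2, \<dots>\<close>
  of \<open>d \<times> d\<close> matrices. Having \<open>d\<^sup>2\<close> elements it is a basis, and the completeness relation
  below expresses exactly that.\<close>

definition su_basis :: "nat \<Rightarrow> (nat \<Rightarrow> complex mat) \<Rightarrow> nat \<Rightarrow> nat \<Rightarrow> nat \<Rightarrow> complex" where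
  "su_basis d lam \<alpha> = (if \<alpha> = 0
     then (\<lambda>a c. inverse (complex_of_real (sqrt (real d))) * curry (($$) (1\<^sub>m d)) a c)
     else (\<lambda>a c. inverse (complex_of_real (sqrt 2)) * curry (($$) (lam (\<alpha> - 1))) a c))"

lemma su_basis_cases:
  assumes "0 < d" "\<alpha> < d*d"
  obtains "\<alpha> = 0" | i where "\<alpha> = Suc i" "i < d\<^sup>2 - 1"
  using assms by (cases \<alpha>) (auto simp: power2_eq_square)

lemma herm_fun_su_basis:
  assumes "0 < d" "su_generators d lam" "\<alpha> < d*d"
  shows "herm_fun d (su_basis d lam \<alpha>)"
  using assms(1,3)
proof (cases rule: su_basis_cases)
  case 1
  then show ?thesis unfolding herm_fun_def su_basis_def by simp
next
  case (2 i)
  show ?thesis unfolding herm_fun_def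
  proof (intro allI impI)
    fix x y assume "x < d" "y < d"
    then have "lam i $$ (y,x) = cnj (lam i $$ (x,y))"
      using su_generators_hermitian[OF assms(2) 2(2)] unfolding hermitian_mat_def by blast
    then show "su_basis d lam \<alpha> y x = cnj (su_basis d lam \<alpha> x y)" by (simp add: su_basis_def 2)
  qed
qed

lemma tr_prod_su_basis:
  assumes d: "0 < d" and su: "su_generators d lam" and \<alpha>: "\<alpha> < d*d" and \<beta>: "\<beta> < d*d"
  shows "tr_prod d (su_basis d lam \<alpha>) (su_basis d lam \<beta>) = (if \<alpha> = \<beta> then 1 else 0)"
proof -
  define s where "s = inverse (complex_of_real (sqrt (real d)))"
  define r where "r = inverse (complex_of_real (sqrt 2))"
  have ss: "s * s * of_nat d = 1" using d unfolding s_def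
    by (simp add: of_real_mult[symmetric] flip: inverse_mult_distrib)
  have rr: "r * r * 2 = 1" unfolding r_def by (simp add: of_real_mult[symmetric] flip: inverse_mult_distrib)
  let ?I = "curry (($$) (1\<^sub>m d))" and ?L = "\<lambda>i. curry (($$) (lam i))"
  have B0: "su_basis d lam 0 = (\<lambda>a c. s * ?I a c)" unfolding su_basis_def s_def by simp
  have BS: "su_basis d lam (Suc i) = (\<lambda>a c. r * ?L i a c)" for i unfolding su_basis_def r_def by simp
  have I: "ftrace d ?I = of_nat d" unfolding ftrace_def by simp
  have IL: "tr_prod d ?I (?L i) = 0" if "i < d\<^sup>2 - 1" for i
    using su_generators_traceless[OF su that] by (simp add: tr_prod_one_left)
  from d \<alpha> show ?thesis
  proof (cases rule: su_basis_cases)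
    case 1
    from d \<beta> show ?thesis
    proof (cases rule: su_basis_cases)
      case 1
      then show ?thesis using \<open>\<alpha> = 0\<close> ss by (simp only: B0 tr_prod_scale tr_prod_one_left I) simp
    next
      case (2 j)
      then show ?thesis using \<open>\<alpha> = 0\<close> by (simp only: B0 BS tr_prod_scale IL) simp
    qed
  next
    case (2 i)
    from d \<beta> show ?thesis
    proof (cases rule: su_basis_cases)
      case 1
      then show ?thesis using 2 by (simp only: B0 BS tr_prod_scale tr_prod_commute[of d "?L i"] IL) simp
    next
      case (2 j)
      then show ?thesis using \<open>\<alpha> = Suc i\<close> \<open>i < d\<^sup>2 - 1\<close> rr
        by (simp only: BS tr_prod_scale su_generators_orthogonal[OF su]) simp
    qed
  qed
qed

lemma su_basis_orthonormal:
  assumes d: "0 < d" and su: "su_generators d lam" and "\<alpha> < d*d" "\<beta> < d*d"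
  shows "(\<Sum>p<d*d. cnj (su_basis d lam \<alpha> (p div d) (p mod d)) * su_basis d lam \<beta> (p div d) (p mod d))
       = (if \<alpha> = \<beta> then 1 else 0)"
proof -
  have "(\<Sum>p<d*d. cnj (su_basis d lam \<alpha> (p div d) (p mod d)) * su_basis d lam \<beta> (p div d) (p mod d))
      = (\<Sum>x<d. \<Sum>y<d. cnj (su_basis d lam \<alpha> x y) * su_basis d lam \<beta> x y)"
    unfolding sum_lessThan_mult by (intro sum.cong refl) simp
  also have "\<dots> = tr_prod d (su_basis d lam \<beta>) (su_basis d lam \<alpha>)"
    unfolding tr_prod_def
  proof (intro sum.cong refl)
    fix x y assume "x \<in> {..<d}" "y \<in> {..<d}"
    then have "su_basis d lam \<alpha> y x = cnj (su_basis d lam \<alpha> x y)"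
      using herm_fun_su_basis[OF d su assms(3)] unfolding herm_fun_def by blast
    then show "cnj (su_basis d lam \<alpha> x y) * su_basis d lam \<beta> x y = su_basis d lam \<beta> x y * su_basis d lam \<alpha> y x"
      by simp
  qed
  finally show ?thesis using tr_prod_su_basis[OF d su assms(4,3)] by auto
qed

lemma su_generators_completeness:
  assumes d: "0 < d" and su: "su_generators d lam" and "a < d" "c < d" "b < d" "e < d"
  shows "(\<Sum>i<d\<^sup>2 - 1. lam i $$ (a,c) * lam i $$ (b,e)) =
    2 * (if a = e \<and> c = b then 1 else 0) - 2 / of_nat d * (if a = c \<and> b = e then 1 else 0)"
proof -
  let ?U = "\<lambda>p \<alpha>. su_basis d lam \<alpha> (p div d) (p mod d)"
  define r where "r = complex_of_real (sqrt 2)"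
  have rr: "r * r = 2" unfolding r_def of_real_mult[symmetric] by simp
  have cr: "cnj r = r" unfolding r_def by simp
  have ss: "complex_of_real (sqrt (real d)) * complex_of_real (sqrt (real d)) = of_nat d"
    unfolding of_real_mult[symmetric] by simp
  have N: "d*d = Suc (d\<^sup>2 - 1)" using d by (simp add: power2_eq_square)
  have p: "a*d+c < d*d" "e*d+b < d*d" using assms(3-6) by (simp_all add: mult_index_less)
  have "(\<Sum>\<alpha><d*d. ?U (a*d+c) \<alpha> * cnj (?U (e*d+b) \<alpha>)) = (if a*d+c = e*d+b then 1 else 0)"
    by (rule orthonormal_cols_imp_rows[OF su_basis_orthonormal[OF d su] p])
  also have "(a*d+c = e*d+b) = (a = e \<and> c = b)"
  proof
    assume eq: "a*d+c = e*d+b"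
    have "a = (a*d+c) div d" "c = (a*d+c) mod d" "e = (e*d+b) div d" "b = (e*d+b) mod d"
      using assms(4,5) by simp_all
    then show "a = e \<and> c = b" using eq by metis
  qed simp
  finally have C: "(\<Sum>\<alpha><d*d. ?U (a*d+c) \<alpha> * cnj (?U (e*d+b) \<alpha>)) = (if a = e \<and> c = b then 1 else 0)" .
  have "(\<Sum>\<alpha><d*d. ?U (a*d+c) \<alpha> * cnj (?U (e*d+b) \<alpha>))
      = ?U (a*d+c) 0 * cnj (?U (e*d+b) 0) + (\<Sum>i<d\<^sup>2 - 1. ?U (a*d+c) (Suc i) * cnj (?U (e*d+b) (Suc i)))"
    unfolding N by (rule sum.lessThan_Suc_shift)
  also have "?U (a*d+c) 0 * cnj (?U (e*d+b) 0) = (if a = c \<and> b = e then 1 else 0) / of_nat d"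
    using assms(3-6) ss by (auto simp: su_basis_def field_simps)
  also have "(\<Sum>i<d\<^sup>2 - 1. ?U (a*d+c) (Suc i) * cnj (?U (e*d+b) (Suc i)))
      = (\<Sum>i<d\<^sup>2 - 1. lam i $$ (a,c) * lam i $$ (b,e)) / 2"
    unfolding sum_divide_distrib
  proof (rule sum.cong[OF refl])
    fix i assume "i \<in> {..<d\<^sup>2 - 1}"
    then have "lam i $$ (e,b) = cnj (lam i $$ (b,e))"
      using su_generators_hermitian[OF su] assms(5,6) unfolding hermitian_mat_def by blast
    then show "?U (a*d+c) (Suc i) * cnj (?U (e*d+b) (Suc i)) = lam i $$ (a,c) * lam i $$ (b,e) / 2"
      using assms(4,5) rr cr by (simp add: su_basis_def r_def[symmetric] field_simps)
  qed
  finally show ?thesis using C d by (auto simp: field_simps split: if_splits)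
qed

lemma su_generators_contraction:
  assumes d: "0 < d" and su: "su_generators d lam"
  shows "(\<Sum>i<d\<^sup>2 - 1. tr_prod d (curry (($$) (lam i))) X * tr_prod d (curry (($$) (lam i))) Y)
       = 2 * tr_prod d X Y - 2 / of_nat d * ftrace d X * ftrace d Y"
proof -
  let ?I = "{..<d\<^sup>2 - 1}" and ?k = "2 / of_nat d :: complex"
  have split_if: "z * (2 * (if P then 1 else 0) - ?k * (if Q then 1 else 0))
      = 2 * (if P then z else 0) - ?k * (if Q then z else 0)" for z :: complex and P Q
    by (cases P; cases Q) (simp_all add: algebra_simps)
  have delta: "(\<Sum>x<d. if a = x \<and> P then f x else 0) = (if P then f a else 0)"
    "(\<Sum>x<d. if P \<and> a = x then f x else 0) = (if P then f a else 0)"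
    "(\<Sum>x<d. if x = a then f x else 0) = f a"
    if "a < d" for a P and f :: "nat \<Rightarrow> complex"
    using that by (cases P; simp add: sum.delta)+
  have "(\<Sum>i\<in>?I. tr_prod d (curry (($$) (lam i))) X * tr_prod d (curry (($$) (lam i))) Y)
     = (\<Sum>i\<in>?I. \<Sum>a<d. \<Sum>a'<d. \<Sum>c<d. \<Sum>c'<d. (lam i $$ (a,c) * X c a) * (lam i $$ (a',c') * Y c' a'))"
    unfolding tr_prod_def curry_conv by (simp only: sum_product)
  also have "\<dots> = (\<Sum>a<d. \<Sum>a'<d. \<Sum>c<d. \<Sum>c'<d. \<Sum>i\<in>?I. (lam i $$ (a,c) * X c a) * (lam i $$ (a',c') * Y c' a'))"
    by (simp only: sum.swap[of _ ?I])
  also have "\<dots> = (\<Sum>a<d. \<Sum>a'<d. \<Sum>c<d. \<Sum>c'<d. X c a * Y c' a' *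
      (2 * (if a = c' \<and> c = a' then 1 else 0) - ?k * (if a = c \<and> a' = c' then 1 else 0)))"
  proof (intro sum.cong refl)
    fix a a' c c' assume "a \<in> {..<d}" "a' \<in> {..<d}" "c \<in> {..<d}" "c' \<in> {..<d}"
    then have "(\<Sum>i\<in>?I. lam i $$ (a,c) * lam i $$ (a',c')) =
      2 * (if a = c' \<and> c = a' then 1 else 0) - ?k * (if a = c \<and> a' = c' then 1 else 0)"
      by (intro su_generators_completeness[OF d su]) auto
    then show "(\<Sum>i\<in>?I. (lam i $$ (a,c) * X c a) * (lam i $$ (a',c') * Y c' a')) = X c a * Y c' a' *
      (2 * (if a = c' \<and> c = a' then 1 else 0) - ?k * (if a = c \<and> a' = c' then 1 else 0))"
      by (simp add: sum_distrib_left[symmetric] mult_ac)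
  qed
  also have "\<dots> = (\<Sum>a<d. \<Sum>a'<d. \<Sum>c<d. \<Sum>c'<d.
      2 * (if a = c' \<and> c = a' then X c a * Y c' a' else 0) - ?k * (if a = c \<and> a' = c' then X c a * Y c' a' else 0))"
    by (intro sum.cong refl) (rule split_if)
  also have "\<dots> = 2 * (\<Sum>a<d. \<Sum>a'<d. \<Sum>c<d. \<Sum>c'<d. if a = c' \<and> c = a' then X c a * Y c' a' else 0)
      - ?k * (\<Sum>a<d. \<Sum>a'<d. \<Sum>c<d. \<Sum>c'<d. if a = c \<and> a' = c' then X c a * Y c' a' else 0)"
    by (simp only: sum_subtractf sum_distrib_left)
  also have "(\<Sum>a<d. \<Sum>a'<d. \<Sum>c<d. \<Sum>c'<d. if a = c' \<and> c = a' then X c a * Y c' a' else 0)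
      = (\<Sum>a<d. \<Sum>a'<d. X a' a * Y a a')"
    by (intro sum.cong refl) (simp add: delta)
  also have "\<dots> = tr_prod d X Y"
    unfolding tr_prod_def by (subst sum.swap) (simp only: mult.commute)
  also have "(\<Sum>a<d. \<Sum>a'<d. \<Sum>c<d. \<Sum>c'<d. if a = c \<and> a' = c' then X c a * Y c' a' else 0)
      = (\<Sum>a<d. \<Sum>a'<d. X a a * Y a' a')"
    by (intro sum.cong refl) (simp add: delta)
  also have "\<dots> = ftrace d X * ftrace d Y"
    unfolding ftrace_def by (simp only: sum_product)
  finally show ?thesis by (simp only: mult.assoc)
qed
section \<open>Density matrices and classical-quantum states\<close>

lemma density_mat_iff:
  "density_mat n A \<longleftrightarrow> hermitian_mat n A \<and> psd_fun n (curry (($$) A)) \<and> mtrace A = 1"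
proof -
  have "(\<forall>v \<in> carrier_vec n. 0 \<le> Re (\<Sum>i<n. \<Sum>j<n. cnj (v $ i) * A $$ (i,j) * v $ j))
      \<longleftrightarrow> psd_fun n (curry (($$) A))"
  proof
    assume H: "\<forall>v \<in> carrier_vec n. 0 \<le> Re (\<Sum>i<n. \<Sum>j<n. cnj (v $ i) * A $$ (i,j) * v $ j)"
    show "psd_fun n (curry (($$) A))" unfolding psd_fun_def
    proof
      fix w
      have "quad_form n (curry (($$) A)) w = (\<Sum>i<n. \<Sum>j<n. cnj (vec n w $ i) * A $$ (i,j) * vec n w $ j)"
        unfolding quad_form_def by (intro sum.cong refl) simp
      then show "0 \<le> Re (quad_form n (curry (($$) A)) w)" using H[rule_format, of "vec n w"] by simp
    qed
  next
    assume "psd_fun n (curry (($$) A))"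
    then have "0 \<le> Re (quad_form n (curry (($$) A)) (($) v))" for v
      unfolding psd_fun_def by blast
    then show "\<forall>v \<in> carrier_vec n. 0 \<le> Re (\<Sum>i<n. \<Sum>j<n. cnj (v $ i) * A $$ (i,j) * v $ j)"
      unfolding quad_form_def by simp
  qed
  then show ?thesis unfolding density_mat_def by blast
qed

lemma density_mat_normalize:
  assumes herm: "herm_fun n X" and psd: "psd_fun n X"
    and tr: "ftrace n X = complex_of_real t" and t: "0 < t"
  shows "density_mat n (mat n n (\<lambda>(b,d). X b d / complex_of_real t))" (is "density_mat n ?R")
proof -
  have "?R $$ (b,d) = cnj (?R $$ (d,b))" if "b < n" "d < n" for b d
  proof -
    have "X b d = cnj (X d b)" using herm that unfolding herm_fun_def by (metis complex_cnj_cnj)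
    then show ?thesis using that by simp
  qed
  then have "hermitian_mat n ?R" unfolding hermitian_mat_def by (metis mat_carrier)
  moreover have "psd_fun n (curry (($$) ?R))" unfolding psd_fun_def
  proof
    fix w
    have "quad_form n (curry (($$) ?R)) w = quad_form n X w / complex_of_real t"
      unfolding quad_form_def sum_divide_distrib by (intro sum.cong refl) simp
    then show "0 \<le> Re (quad_form n (curry (($$) ?R)) w)"
      using psd t unfolding psd_fun_def by (simp add: Re_divide_of_real)
  qed
  moreover have "mtrace ?R = 1"
    using tr t unfolding mtrace_def ftrace_def by (simp add: sum_divide_distrib[symmetric])
  ultimately show ?thesis unfolding density_mat_iff by blast
qed

lemma density_mat_exists:
  assumes "0 < n"
  shows "\<exists>\<sigma>. density_mat n \<sigma>"
proof -
  define X where "X b d = (if b = d then 1 else 0 :: complex)" for b d :: nat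
  have "herm_fun n X" unfolding herm_fun_def X_def by simp
  moreover have "psd_fun n X" unfolding psd_fun_def
  proof
    fix w
    have "quad_form n X w = (\<Sum>b<n. cnj (w b) * w b)"
      unfolding quad_form_def
    proof (rule sum.cong[OF refl])
      fix b assume "b \<in> {..<n}"
      have "(\<Sum>d<n. cnj (w b) * X b d * w d) = (\<Sum>d<n. if b = d then cnj (w b) * w d else 0)"
        by (intro sum.cong refl) (simp add: X_def)
      then show "(\<Sum>d<n. cnj (w b) * X b d * w d) = cnj (w b) * w b" using \<open>b \<in> {..<n}\<close> by simp
    qed
    then show "0 \<le> Re (quad_form n X w)"
      by (simp add: Re_sum complex_mult_cnj mult.commute[of "cnj _"] sum_nonneg)
  qed
  moreover have "ftrace n X = complex_of_real (real n)" unfolding ftrace_def X_def by simp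
  ultimately show ?thesis using density_mat_normalize[of n X "real n"] assms by auto
qed

definition cq_state ::
  "nat \<Rightarrow> nat \<Rightarrow> (nat \<Rightarrow> complex vec) \<Rightarrow> (nat \<Rightarrow> real) \<Rightarrow> (nat \<Rightarrow> complex mat) \<Rightarrow> complex mat" where
  "cq_state m n e p \<sigma> =
     mat (m*n) (m*n) (\<lambda>ij. \<Sum>k<m. complex_of_real (p k) * kron (proj (e k)) (\<sigma> k) $$ ij)"

lemma zero_discord_iff:
  "zero_discord m n \<chi> \<longleftrightarrow> (\<exists>e p \<sigma>. onb m e \<and> (\<forall>k<m. 0 \<le> p k) \<and> (\<Sum>k<m. p k) = 1
     \<and> (\<forall>k<m. density_mat n (\<sigma> k)) \<and> \<chi> = cq_state m n e p \<sigma>)"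
  unfolding zero_discord_def cq_state_def ..

lemma cq_state_carrier: "cq_state m n e p \<sigma> \<in> carrier_mat (m*n) (m*n)"
  unfolding cq_state_def by simp

lemma herm_fun_cq_state:
  assumes e: "onb m e" and \<sigma>: "\<And>k. k < m \<Longrightarrow> hermitian_mat n (\<sigma> k)"
  shows "herm_fun (m*n) (curry (($$) (cq_state m n e p \<sigma>)))"
proof -
  have K: "kron (proj (e k)) (\<sigma> k) $$ (j,i) = cnj (kron (proj (e k)) (\<sigma> k) $$ (i,j))"
    if "k < m" "i < m*n" "j < m*n" for k i j
  proof -
    have "hermitian_mat (m*n) (kron (proj (e k)) (\<sigma> k))"
      using hermitian_kron[OF hermitian_proj \<sigma>] carrier_vecD[OF onb_vec_carrier[OF e]] that by blast
    then show ?thesis using that unfolding hermitian_mat_def by blast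
  qed
  have "cq_state m n e p \<sigma> $$ (j,i) = cnj (cq_state m n e p \<sigma> $$ (i,j))" if "i < m*n" "j < m*n" for i j
  proof -
    have "cq_state m n e p \<sigma> $$ (j,i) = (\<Sum>k<m. complex_of_real (p k) * kron (proj (e k)) (\<sigma> k) $$ (j,i))"
      using that by (simp add: cq_state_def)
    also have "\<dots> = (\<Sum>k<m. complex_of_real (p k) * cnj (kron (proj (e k)) (\<sigma> k) $$ (i,j)))"
      using that by (intro sum.cong refl arg_cong[where f = "\<lambda>x. _ * x"] K) auto
    also have "\<dots> = cnj (cq_state m n e p \<sigma> $$ (i,j))"
      using that by (simp add: cq_state_def cnj_sum)
    finally show ?thesis .
  qed
  then show ?thesis unfolding herm_fun_def curry_conv by blast
qed

lemma tr_prod_cq_state_left: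
  "tr_prod (m*n) (curry (($$) (cq_state m n e p \<sigma>))) Y
     = (\<Sum>k<m. complex_of_real (p k) * tr_prod (m*n) (curry (($$) (kron (proj (e k)) (\<sigma> k)))) Y)"
proof -
  have "tr_prod (m*n) (curry (($$) (cq_state m n e p \<sigma>))) Y
      = tr_prod (m*n) (\<lambda>i j. \<Sum>k<m. complex_of_real (p k) * curry (($$) (kron (proj (e k)) (\<sigma> k))) i j) Y"
    by (rule tr_prod_cong) (simp_all add: cq_state_def)
  then show ?thesis by (simp only: tr_prod_sum_left)
qed

lemma tr_prod_cq_state_self:
  assumes e: "onb m e" and \<sigma>: "\<And>k. k < m \<Longrightarrow> \<sigma> k \<in> carrier_mat n n"
  shows "tr_prod (m*n) (curry (($$) (cq_state m n e p \<sigma>))) (curry (($$) (cq_state m n e p \<sigma>)))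
       = (\<Sum>k<m. (complex_of_real (p k))\<^sup>2 * tr_prod n (curry (($$) (\<sigma> k))) (curry (($$) (\<sigma> k))))"
proof -
  let ?\<chi> = "curry (($$) (cq_state m n e p \<sigma>))" and ?K = "\<lambda>k. curry (($$) (kron (proj (e k)) (\<sigma> k)))"
  let ?S = "\<lambda>k l. tr_prod n (curry (($$) (\<sigma> k))) (curry (($$) (\<sigma> l)))"
  have KK: "tr_prod (m*n) (?K l) (?K k) = (if l = k then ?S l k else 0)" if "k < m" "l < m" for k l
    using tr_prod_kron[OF proj_carrier_mat proj_carrier_mat \<sigma> \<sigma>] tr_prod_proj_onb[OF e]
      carrier_vecD[OF onb_vec_carrier[OF e]] that by simp
  have "tr_prod (m*n) ?\<chi> ?\<chi> = (\<Sum>k<m. complex_of_real (p k) * tr_prod (m*n) (?K k) ?\<chi>)"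
    by (rule tr_prod_cq_state_left)
  also have "\<dots> = (\<Sum>k<m. complex_of_real (p k) * tr_prod (m*n) ?\<chi> (?K k))"
    by (intro sum.cong refl arg_cong[where f = "\<lambda>x. _ * x"] tr_prod_commute)
  also have "\<dots> = (\<Sum>k<m. complex_of_real (p k) * (\<Sum>l<m. complex_of_real (p l) * tr_prod (m*n) (?K l) (?K k)))"
    by (simp only: tr_prod_cq_state_left)
  also have "\<dots> = (\<Sum>k<m. complex_of_real (p k) * (complex_of_real (p k) * ?S k k))"
    by (intro sum.cong refl) (simp add: KK if_distrib[where f = "\<lambda>x. _ * x"] sum.delta cong: if_cong)
  finally show ?thesis by (simp add: power2_eq_square mult.assoc)
qed
section \<open>Distance to classical-quantum states\<close>

locale bipartite_state =
  fixes m n :: nat and \<rho> :: "complex mat"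
  assumes m_pos: "0 < m" and n_pos: "0 < n" and density: "density_mat (m*n) \<rho>"
begin

lemma hermitian_rho: "hermitian_mat (m*n) \<rho>"
  using density unfolding density_mat_def by blast

lemma rho_carrier: "\<rho> \<in> carrier_mat (m*n) (m*n)"
  using hermitian_rho unfolding hermitian_mat_def by blast

lemma psd_fun_rho: "psd_fun (m*n) (curry (($$) \<rho>))"
  using density unfolding density_mat_iff by blast

lemma trace_rho: "mtrace \<rho> = 1"
  using density unfolding density_mat_def by blast

text \<open>\<open>cond_state e k = Tr\<^sub>A ((|e\<^sub>k\<rangle>\<langle>e\<^sub>k| \<otimes> I) \<rho>)\<close>: the unnormalised state of the second factor
  after outcome \<open>k\<close> of measuring the first factor in the basis \<open>e\<close>.\<close>

definition cond_state :: "(nat \<Rightarrow> complex vec) \<Rightarrow> nat \<Rightarrow> nat \<Rightarrow> nat \<Rightarrow> complex" where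
  "cond_state e k = ptrace_A m n \<rho> (\<lambda>a c. e k $ a * cnj (e k $ c))"

definition reduced_B :: "nat \<Rightarrow> nat \<Rightarrow> complex" where
  "reduced_B = ptrace_A m n \<rho> (curry (($$) (1\<^sub>m m)))"

definition cond_prob :: "(nat \<Rightarrow> complex vec) \<Rightarrow> nat \<Rightarrow> real" where
  "cond_prob e k = Re (ftrace n (cond_state e k))"

text \<open>By \<open>distance_lower_bound\<close> and \<open>distance_attained\<close> below, this is the least squared
  distance from \<open>\<rho>\<close> to a classical-quantum state with basis \<open>e\<close>.\<close>

definition cq_distance :: "(nat \<Rightarrow> complex vec) \<Rightarrow> real" where
  "cq_distance e = Re (tr_prod (m*n) (curry (($$) \<rho>)) (curry (($$) \<rho>))
     - (\<Sum>k<m. tr_prod n (cond_state e k) (cond_state e k)))"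

lemma herm_fun_cond_state: "herm_fun n (cond_state e k)"
  unfolding cond_state_def
  by (rule herm_fun_ptrace_A[OF herm_fun_hermitian_mat[OF hermitian_rho]]) (simp add: herm_fun_def)

lemma psd_fun_cond_state: "psd_fun n (cond_state e k)"
  unfolding psd_fun_def
proof
  fix w
  define v where "v i = e k $ (i div n) * w (i mod n)" for i
  have "quad_form (m*n) (curry (($$) \<rho>)) v
      = (\<Sum>a<m. \<Sum>b<n. \<Sum>c<m. \<Sum>d<n. cnj (e k $ a * w b) * \<rho> $$ (a*n+b, c*n+d) * (e k $ c * w d))"
    unfolding quad_form_def sum_lessThan_mult v_def by (intro sum.cong refl) simp
  also have "\<dots> = (\<Sum>b<n. \<Sum>d<n. \<Sum>a<m. \<Sum>c<m. cnj (e k $ a * w b) * \<rho> $$ (a*n+b, c*n+d) * (e k $ c * w d))"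
    by (rule sum_swap4)
  also have "\<dots> = (\<Sum>b<n. \<Sum>d<n. \<Sum>c<m. \<Sum>a<m.
      cnj (w b) * (e k $ c * cnj (e k $ a) * \<rho> $$ (a*n+b, c*n+d)) * w d)"
    by (rule sum.cong[OF refl], rule sum.cong[OF refl], subst sum.swap) (simp add: mult_ac)
  also have "\<dots> = quad_form n (cond_state e k) w"
    unfolding quad_form_def cond_state_def ptrace_A_def tr_prod_def
    by (simp only: sum_distrib_left sum_distrib_right)
  finally show "0 \<le> Re (quad_form n (cond_state e k) w)"
    using psd_fun_rho unfolding psd_fun_def by metis
qed

lemma ftrace_cond_state: "complex_of_real (cond_prob e k) = ftrace n (cond_state e k)"
proof -
  from hermitian_one_mat show ?thesis
    unfolding cond_prob_def tr_prod_one_left[symmetric]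
    by (rule tr_prod_herm_real[OF herm_fun_hermitian_mat herm_fun_cond_state])
qed

lemma cond_prob_nonneg: "0 \<le> cond_prob e k"
  unfolding cond_prob_def ftrace_def Re_sum
  by (intro sum_nonneg psd_diag_nonneg[OF psd_fun_cond_state]) simp

lemma sum_cond_state:
  assumes "onb m e"
  shows "(\<Sum>k<m. cond_state e k b d) = reduced_B b d"
  unfolding cond_state_def reduced_B_def ptrace_A_sum[symmetric]
  by (rule ptrace_A_cong) (simp add: onb_completeness[OF assms])

lemma reduced_B_eq_ftrace: "reduced_B b d = ftrace m (\<lambda>c a. \<rho> $$ (c*n+b, a*n+d))"
  unfolding reduced_B_def ptrace_A_def by (rule tr_prod_one_left)

lemma ftrace_reduced_B: "ftrace n reduced_B = 1"
proof -
  have "ftrace n reduced_B = (\<Sum>b<n. \<Sum>a<m. \<rho> $$ (a*n+b, a*n+b))"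
    unfolding ftrace_def reduced_B_eq_ftrace ..
  also have "\<dots> = mtrace \<rho>"
    unfolding mtrace_def using rho_carrier by (simp add: sum_lessThan_mult sum.swap[of _ "{..<n}"])
  finally show ?thesis using trace_rho by simp
qed

lemma sum_cond_prob:
  assumes "onb m e"
  shows "(\<Sum>k<m. cond_prob e k) = 1"
proof -
  have "(\<Sum>k<m. ftrace n (cond_state e k)) = ftrace n reduced_B"
    unfolding ftrace_def by (subst sum.swap) (simp add: sum_cond_state[OF assms])
  then have "complex_of_real (\<Sum>k<m. cond_prob e k) = 1"
    by (simp add: ftrace_cond_state ftrace_reduced_B)
  then show ?thesis by (metis of_real_eq_1_iff)
qed

definition cond_density :: "(nat \<Rightarrow> complex vec) \<Rightarrow> nat \<Rightarrow> complex mat" where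
  "cond_density e k = (if 0 < cond_prob e k
     then mat n n (\<lambda>(b,d). cond_state e k b d / complex_of_real (cond_prob e k))
     else (SOME \<sigma>. density_mat n \<sigma>))"

lemma density_cond_density: "density_mat n (cond_density e k)"
proof (cases "0 < cond_prob e k")
  case True
  then show ?thesis unfolding cond_density_def
    using density_mat_normalize[OF herm_fun_cond_state psd_fun_cond_state ftrace_cond_state[symmetric]]
    by simp
next
  case False
  then show ?thesis unfolding cond_density_def using density_mat_exists[OF n_pos] someI_ex by simp
qed

lemma cond_state_factor:
  assumes "b < n" "d < n"
  shows "cond_state e k b d = complex_of_real (cond_prob e k) * cond_density e k $$ (b,d)"
proof (cases "0 < cond_prob e k")
  case True
  then show ?thesis using assms unfolding cond_density_def by simp
next
  case False
  then have "ftrace n (cond_state e k) = 0"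
    using cond_prob_nonneg[of e k] ftrace_cond_state[of e k] by simp
  then have "cond_state e k b d = 0"
    using psd_trace_zero_imp_zero[OF herm_fun_cond_state psd_fun_cond_state] assms by blast
  then show ?thesis using False cond_prob_nonneg[of e k] by simp
qed

lemma ptrace_A_proj:
  assumes e: "onb m e" and k: "k < m"
  shows "ptrace_A m n \<rho> (curry (($$) (proj (e k)))) = cond_state e k"
  unfolding cond_state_def using onb_vec_carrier[OF e k]
  by (intro ext ptrace_A_cong) (simp add: proj_def)

lemma tr_prod_cq_state_rho:
  assumes e: "onb m e" and \<sigma>: "\<And>k. k < m \<Longrightarrow> \<sigma> k \<in> carrier_mat n n"
  shows "tr_prod (m*n) (curry (($$) (cq_state m n e p \<sigma>))) (curry (($$) \<rho>))
       = (\<Sum>k<m. complex_of_real (p k) * tr_prod n (curry (($$) (\<sigma> k))) (cond_state e k))"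
  unfolding tr_prod_cq_state_left
proof (intro sum.cong refl arg_cong[where f = "\<lambda>x. _ * x"])
  fix k assume "k \<in> {..<m}"
  then have k: "k < m" by simp
  have "tr_prod (m*n) (curry (($$) (kron (proj (e k)) (\<sigma> k)))) (curry (($$) \<rho>))
      = tr_prod n (curry (($$) (\<sigma> k))) (ptrace_A m n \<rho> (curry (($$) (proj (e k)))))"
    using carrier_vecD[OF onb_vec_carrier[OF e k]] by (intro tr_prod_kron_ptrace_A proj_carrier_mat \<sigma> k)
  also have "ptrace_A m n \<rho> (curry (($$) (proj (e k)))) = cond_state e k"
    by (rule ptrace_A_proj[OF e k])
  finally show "tr_prod (m*n) (curry (($$) (kron (proj (e k)) (\<sigma> k)))) (curry (($$) \<rho>))
      = tr_prod n (curry (($$) (\<sigma> k))) (cond_state e k)" .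
qed

end
context bipartite_state
begin

lemma distance_cq_state:
  fixes p :: "nat \<Rightarrow> real"
  assumes e: "onb m e" and \<sigma>: "\<And>k. k < m \<Longrightarrow> \<sigma> k \<in> carrier_mat n n"
  defines "\<chi> \<equiv> cq_state m n e p \<sigma>"
  shows "mtrace ((\<rho> - \<chi>) * (\<rho> - \<chi>)) = tr_prod (m*n) (curry (($$) \<rho>)) (curry (($$) \<rho>))
     - (\<Sum>k<m. tr_prod n (cond_state e k) (cond_state e k))
     + (\<Sum>k<m. tr_prod n (\<lambda>b d. cond_state e k b d - complex_of_real (p k) * \<sigma> k $$ (b,d))
                          (\<lambda>b d. cond_state e k b d - complex_of_real (p k) * \<sigma> k $$ (b,d)))"
proof -
  let ?R = "curry (($$) \<rho>)" and ?X = "curry (($$) \<chi>)"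
  let ?r = "cond_state e" and ?s = "\<lambda>k. curry (($$) (\<sigma> k))" and ?p = "\<lambda>k. complex_of_real (p k)"
  have \<chi>: "\<chi> \<in> carrier_mat (m*n) (m*n)" unfolding \<chi>_def by (rule cq_state_carrier)
  have c: "\<rho> - \<chi> \<in> carrier_mat (m*n) (m*n)" using \<chi> by (rule minus_carrier_mat)
  have "mtrace ((\<rho> - \<chi>) * (\<rho> - \<chi>)) = tr_prod (m*n) (curry (($$) (\<rho> - \<chi>))) (curry (($$) (\<rho> - \<chi>)))"
    using c by (rule mtrace_mult_tr_prod[OF _ c])
  also have "\<dots> = tr_prod (m*n) (\<lambda>i j. ?R i j - 1 * ?X i j) (\<lambda>i j. ?R i j - 1 * ?X i j)"
    using \<chi> by (intro tr_prod_cong) auto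
  also have "\<dots> = tr_prod (m*n) ?R ?R - 2 * tr_prod (m*n) ?X ?R + tr_prod (m*n) ?X ?X"
    by (subst tr_prod_diff_square) simp
  also have "\<dots> = tr_prod (m*n) ?R ?R - 2 * (\<Sum>k<m. ?p k * tr_prod n (?s k) (?r k))
      + (\<Sum>k<m. (?p k)\<^sup>2 * tr_prod n (?s k) (?s k))"
    unfolding \<chi>_def using tr_prod_cq_state_rho[OF e \<sigma>] tr_prod_cq_state_self[OF e \<sigma>] by simp
  also have "\<dots> = tr_prod (m*n) ?R ?R - (\<Sum>k<m. tr_prod n (?r k) (?r k))
      + (\<Sum>k<m. tr_prod n (?r k) (?r k) - 2 * ?p k * tr_prod n (?s k) (?r k) + (?p k)\<^sup>2 * tr_prod n (?s k) (?s k))"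
    by (simp add: sum.distrib sum_subtractf sum_distrib_left mult.assoc)
  also have "(\<Sum>k<m. tr_prod n (?r k) (?r k) - 2 * ?p k * tr_prod n (?s k) (?r k) + (?p k)\<^sup>2 * tr_prod n (?s k) (?s k))
      = (\<Sum>k<m. tr_prod n (\<lambda>b d. ?r k b d - ?p k * ?s k b d) (\<lambda>b d. ?r k b d - ?p k * ?s k b d))"
    by (simp only: tr_prod_diff_square)
  finally show ?thesis by (simp add: curry_def)
qed

lemma distance_nonneg:
  assumes "zero_discord m n \<chi>"
  shows "0 \<le> Re (mtrace ((\<rho> - \<chi>) * (\<rho> - \<chi>)))"
proof -
  obtain e p \<sigma> where e: "onb m e" and \<sigma>: "\<forall>k<m. density_mat n (\<sigma> k)" and \<chi>: "\<chi> = cq_state m n e p \<sigma>"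
    using assms unfolding zero_discord_iff by blast
  have c: "\<rho> - \<chi> \<in> carrier_mat (m*n) (m*n)" unfolding \<chi> by (rule minus_carrier_mat[OF cq_state_carrier])
  have R: "herm_fun (m*n) (curry (($$) \<rho>))" by (rule herm_fun_hermitian_mat[OF hermitian_rho])
  have X: "herm_fun (m*n) (curry (($$) \<chi>))"
    unfolding \<chi> using \<sigma> by (intro herm_fun_cq_state[OF e]) (simp add: density_mat_def)
  have "herm_fun (m*n) (curry (($$) (\<rho> - \<chi>)))"
    unfolding herm_fun_def
  proof (intro allI impI)
    fix b d assume "b < m*n" "d < m*n"
    then have "\<rho> $$ (d,b) = cnj (\<rho> $$ (b,d))" "\<chi> $$ (d,b) = cnj (\<chi> $$ (b,d))"
      using R X unfolding herm_fun_def curry_conv by blast+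
    then show "curry (($$) (\<rho> - \<chi>)) d b = cnj (curry (($$) (\<rho> - \<chi>)) b d)"
      using \<open>b < m*n\<close> \<open>d < m*n\<close> carrier_matD[OF cq_state_carrier] unfolding \<chi> by simp
  qed
  then show ?thesis using c by (simp add: mtrace_mult_tr_prod tr_prod_self_nonneg)
qed

lemma distance_lower_bound:
  assumes "zero_discord m n \<chi>"
  shows "\<exists>e. onb m e \<and> cq_distance e \<le> Re (mtrace ((\<rho> - \<chi>) * (\<rho> - \<chi>)))"
proof -
  obtain e p \<sigma> where e: "onb m e" and \<sigma>: "\<forall>k<m. density_mat n (\<sigma> k)" and \<chi>: "\<chi> = cq_state m n e p \<sigma>"
    using assms unfolding zero_discord_iff by blast
  have c: "\<sigma> k \<in> carrier_mat n n" if "k < m" for k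
    using \<sigma> that unfolding density_mat_def hermitian_mat_def by blast
  define Z where "Z k b d = cond_state e k b d - complex_of_real (p k) * \<sigma> k $$ (b,d)" for k b d
  have "herm_fun n (Z k)" if "k < m" for k
    unfolding herm_fun_def
  proof (intro allI impI)
    fix b d assume "b < n" "d < n"
    then have "cond_state e k d b = cnj (cond_state e k b d)" "\<sigma> k $$ (d,b) = cnj (\<sigma> k $$ (b,d))"
      using herm_fun_cond_state \<sigma> that unfolding herm_fun_def density_mat_def hermitian_mat_def by blast+
    then show "Z k d b = cnj (Z k b d)" unfolding Z_def by simp
  qed
  then have "0 \<le> (\<Sum>k<m. Re (tr_prod n (Z k) (Z k)))" by (intro sum_nonneg tr_prod_self_nonneg) simp
  then show ?thesis
    using e distance_cq_state[OF e c, where p = p] unfolding \<chi> cq_distance_def Z_def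
    by (intro exI[of _ e]) (simp add: Re_sum)
qed

lemma distance_attained:
  assumes e: "onb m e"
  shows "\<exists>\<chi>. zero_discord m n \<chi> \<and> Re (mtrace ((\<rho> - \<chi>) * (\<rho> - \<chi>))) = cq_distance e"
proof -
  define \<chi> where "\<chi> = cq_state m n e (cond_prob e) (cond_density e)"
  have "zero_discord m n \<chi>"
    unfolding zero_discord_iff \<chi>_def
    using e cond_prob_nonneg sum_cond_prob[OF e] density_cond_density by blast
  moreover have "tr_prod n (\<lambda>b d. cond_state e k b d - complex_of_real (cond_prob e k) * cond_density e k $$ (b,d))
      (\<lambda>b d. cond_state e k b d - complex_of_real (cond_prob e k) * cond_density e k $$ (b,d)) = 0" for k
  proof -
    have "tr_prod n (\<lambda>b d. cond_state e k b d - complex_of_real (cond_prob e k) * cond_density e k $$ (b,d))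
        (\<lambda>b d. cond_state e k b d - complex_of_real (cond_prob e k) * cond_density e k $$ (b,d))
      = tr_prod n (\<lambda>_ _. 0) (\<lambda>_ _. 0)"
      by (rule tr_prod_cong) (simp_all add: cond_state_factor)
    then show ?thesis by (simp add: tr_prod_def)
  qed
  moreover have "cond_density e k \<in> carrier_mat n n" for k
    using density_cond_density unfolding density_mat_def hermitian_mat_def by blast
  ultimately show ?thesis
    using distance_cq_state[OF e, of "cond_density e" "cond_prob e"] unfolding \<chi>_def cq_distance_def
    by (intro exI[of _ \<chi>]) (simp add: \<chi>_def)
qed

end
section \<open>The correlation matrix\<close>

locale su_bipartite_state = bipartite_state +
  fixes lamA lamB :: "nat \<Rightarrow> complex mat"
  assumes su_A: "su_generators m lamA" and su_B: "su_generators n lamB"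
begin

text \<open>\<open>gen_block i = Tr\<^sub>A ((lamA i \<otimes> I) \<rho>)\<close>; \<open>x\<close>, \<open>T\<close> and \<open>G\<close> are all read off these operators.\<close>

definition gen_block :: "nat \<Rightarrow> nat \<Rightarrow> nat \<Rightarrow> complex" where
  "gen_block i = ptrace_A m n \<rho> (curry (($$) (lamA i)))"

lemma gen_block_eq_tr_prod: "gen_block i b d = tr_prod m (curry (($$) (lamA i))) (\<lambda>c a. \<rho> $$ (c*n+b, a*n+d))"
  unfolding gen_block_def ptrace_A_def ..

lemma mtrace_kron_rho:
  assumes "A \<in> carrier_mat m m" "B \<in> carrier_mat n n"
  shows "mtrace (kron A B * \<rho>) = tr_prod n (curry (($$) B)) (ptrace_A m n \<rho> (curry (($$) A)))"
  using assms by (simp add: mtrace_mult_tr_prod[OF kron_carrier_mat rho_carrier] tr_prod_kron_ptrace_A)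

lemma xvec_eq:
  assumes i: "i < m\<^sup>2 - 1"
  shows "complex_of_real (xvec m n lamA \<rho> i) = of_nat m / 2 * ftrace n (gen_block i)"
proof -
  have "mtrace (kron (lamA i) (1\<^sub>m n) * \<rho>) = ftrace n (gen_block i)"
    unfolding gen_block_def
    by (simp add: mtrace_kron_rho[OF su_generators_carrier[OF su_A i]] tr_prod_one_left)
  moreover have "complex_of_real (Re (mtrace (kron (lamA i) (1\<^sub>m n) * \<rho>))) = mtrace (kron (lamA i) (1\<^sub>m n) * \<rho>)"
    by (rule mtrace_mult_hermitian_real[OF hermitian_kron[OF su_generators_hermitian[OF su_A i]
        hermitian_one_mat] hermitian_rho])
  ultimately show ?thesis unfolding xvec_def by simp
qed

lemma tmat_eq:
  assumes i: "i < m\<^sup>2 - 1" and j: "j < n\<^sup>2 - 1"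
  shows "complex_of_real (tmat m n lamA lamB \<rho> i j) = of_nat (m*n) / 4 * tr_prod n (curry (($$) (lamB j))) (gen_block i)"
proof -
  have "mtrace (kron (lamA i) (lamB j) * \<rho>) = tr_prod n (curry (($$) (lamB j))) (gen_block i)"
    unfolding gen_block_def
    by (rule mtrace_kron_rho[OF su_generators_carrier[OF su_A i] su_generators_carrier[OF su_B j]])
  moreover have "complex_of_real (Re (mtrace (kron (lamA i) (lamB j) * \<rho>))) = mtrace (kron (lamA i) (lamB j) * \<rho>)"
    by (rule mtrace_mult_hermitian_real[OF hermitian_kron[OF su_generators_hermitian[OF su_A i]
        su_generators_hermitian[OF su_B j]] hermitian_rho])
  ultimately show ?thesis unfolding tmat_def by simp
qed

lemma Gmat_eq:
  assumes i: "i < m\<^sup>2 - 1" and i': "i' < m\<^sup>2 - 1"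
  shows "complex_of_real (Gmat m n lamA lamB \<rho> i i') = of_nat m ^ 2 * of_nat n / 4 * tr_prod n (gen_block i) (gen_block i')"
proof -
  let ?f = "\<lambda>i. ftrace n (gen_block i)" and ?t = "\<lambda>j i. tr_prod n (curry (($$) (lamB j))) (gen_block i)"
  have T: "(\<Sum>j<n\<^sup>2 - 1. complex_of_real (tmat m n lamA lamB \<rho> i j) * complex_of_real (tmat m n lamA lamB \<rho> i' j))
      = (of_nat (m*n) / 4)\<^sup>2 * (2 * tr_prod n (gen_block i) (gen_block i') - 2 / of_nat n * ?f i * ?f i')"
    unfolding su_generators_contraction[OF n_pos su_B, symmetric] sum_distrib_left
  proof (intro sum.cong refl)
    fix j assume "j \<in> {..<n\<^sup>2 - 1}"
    then have j: "j < n\<^sup>2 - 1" by simp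
    show "complex_of_real (tmat m n lamA lamB \<rho> i j) * complex_of_real (tmat m n lamA lamB \<rho> i' j)
        = (of_nat (m*n) / 4)\<^sup>2 * (?t j i * ?t j i')"
      by (simp only: tmat_eq[OF i j] tmat_eq[OF i' j]) (simp add: power2_eq_square mult_ac)
  qed
  have "complex_of_real (Gmat m n lamA lamB \<rho> i i')
      = complex_of_real (xvec m n lamA \<rho> i) * complex_of_real (xvec m n lamA \<rho> i')
        + 2 / of_nat n * (\<Sum>j<n\<^sup>2 - 1. complex_of_real (tmat m n lamA lamB \<rho> i j) * complex_of_real (tmat m n lamA lamB \<rho> i' j))"
    unfolding Gmat_def by simp
  also have "\<dots> = of_nat m / 2 * ?f i * (of_nat m / 2 * ?f i')
      + 2 / of_nat n * ((of_nat (m*n) / 4)\<^sup>2 * (2 * tr_prod n (gen_block i) (gen_block i') - 2 / of_nat n * ?f i * ?f i'))"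
    by (simp only: T xvec_eq[OF i] xvec_eq[OF i'])
  finally show ?thesis using n_pos by (simp add: field_simps power2_eq_square)
qed

lemma tr_prod_rho_blocks:
  "tr_prod (m*n) (curry (($$) \<rho>)) (curry (($$) \<rho>))
     = (\<Sum>b<n. \<Sum>d<n. tr_prod m (\<lambda>c a. \<rho> $$ (c*n+b, a*n+d)) (\<lambda>c a. \<rho> $$ (c*n+d, a*n+b)))"
proof -
  have "tr_prod (m*n) (curry (($$) \<rho>)) (curry (($$) \<rho>))
      = (\<Sum>c<m. \<Sum>b<n. \<Sum>a<m. \<Sum>d<n. \<rho> $$ (c*n+b, a*n+d) * \<rho> $$ (a*n+d, c*n+b))"
    unfolding tr_prod_def sum_lessThan_mult by simp
  also have "\<dots> = (\<Sum>b<n. \<Sum>d<n. \<Sum>c<m. \<Sum>a<m. \<rho> $$ (c*n+b, a*n+d) * \<rho> $$ (a*n+d, c*n+b))"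
    by (rule sum_swap4)
  finally show ?thesis unfolding tr_prod_def by simp
qed

lemma sum_tr_prod_gen_block:
  "(\<Sum>i<m\<^sup>2 - 1. tr_prod n (gen_block i) (gen_block i))
     = 2 * tr_prod (m*n) (curry (($$) \<rho>)) (curry (($$) \<rho>)) - 2 / of_nat m * tr_prod n reduced_B reduced_B"
proof -
  have "(\<Sum>i<m\<^sup>2 - 1. tr_prod n (gen_block i) (gen_block i))
      = (\<Sum>b<n. \<Sum>d<n. \<Sum>i<m\<^sup>2 - 1. gen_block i b d * gen_block i d b)"
    unfolding tr_prod_def by (subst sum.swap) (simp only: sum.swap[of _ "{..<m\<^sup>2 - 1}"])
  also have "\<dots> = (\<Sum>b<n. \<Sum>d<n. 2 * tr_prod m (\<lambda>c a. \<rho> $$ (c*n+b, a*n+d)) (\<lambda>c a. \<rho> $$ (c*n+d, a*n+b))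
      - 2 / of_nat m * (reduced_B b d * reduced_B d b))"
    unfolding gen_block_eq_tr_prod su_generators_contraction[OF m_pos su_A] reduced_B_eq_ftrace
    by (simp only: mult.assoc)
  also have "\<dots> = 2 * tr_prod (m*n) (curry (($$) \<rho>)) (curry (($$) \<rho>)) - 2 / of_nat m * tr_prod n reduced_B reduced_B"
    unfolding tr_prod_rho_blocks tr_prod_def[of n reduced_B] by (simp only: sum_subtractf sum_distrib_left)
  finally show ?thesis .
qed

lemma trace_Gmat:
  "(\<Sum>i<m\<^sup>2 - 1. complex_of_real (Gmat m n lamA lamB \<rho> i i))
     = of_nat m ^ 2 * of_nat n / 4 * (2 * tr_prod (m*n) (curry (($$) \<rho>)) (curry (($$) \<rho>))
         - 2 / of_nat m * tr_prod n reduced_B reduced_B)"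
  unfolding sum_tr_prod_gen_block[symmetric] sum_distrib_left by (intro sum.cong refl) (simp add: Gmat_eq)

lemma mu_vec_eq:
  assumes e: "onb m e" and k: "k < m" and i: "i < m\<^sup>2 - 1"
  shows "complex_of_real (mu_vec m lamA (e k) i)
       = complex_of_real (sqrt 2 / 2) * tr_prod m (curry (($$) (lamA i))) (curry (($$) (proj (e k))))"
proof -
  have dim: "dim_vec (e k) = m" using onb_vec_carrier[OF e k] by simp
  have "complex_of_real (Re (mtrace (lamA i * proj (e k)))) = mtrace (lamA i * proj (e k))"
    by (rule mtrace_mult_hermitian_real[OF su_generators_hermitian[OF su_A i] hermitian_proj[OF dim]])
  moreover have "mtrace (lamA i * proj (e k)) = tr_prod m (curry (($$) (lamA i))) (curry (($$) (proj (e k))))"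
    by (rule mtrace_mult_tr_prod[OF su_generators_carrier[OF su_A i] proj_carrier_mat[OF dim]])
  moreover have "sqrt 2 / real m * (real m / 2) = sqrt 2 / 2" using m_pos by simp
  ultimately show ?thesis unfolding mu_vec_def coherence_vec_def by (metis of_real_mult mult.assoc)
qed

lemma gen_block_expansion:
  assumes e: "onb m e" and k: "k < m"
  shows "(\<Sum>i<m\<^sup>2 - 1. tr_prod m (curry (($$) (lamA i))) (curry (($$) (proj (e k)))) * gen_block i b d)
       = 2 * (cond_state e k b d - 1 / of_nat m * reduced_B b d)"
proof -
  have "(\<Sum>i<m\<^sup>2 - 1. tr_prod m (curry (($$) (lamA i))) (curry (($$) (proj (e k)))) * gen_block i b d)
      = 2 * ptrace_A m n \<rho> (curry (($$) (proj (e k)))) b d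
        - 2 / of_nat m * ftrace m (curry (($$) (proj (e k)))) * reduced_B b d"
    unfolding gen_block_eq_tr_prod su_generators_contraction[OF m_pos su_A] reduced_B_eq_ftrace ptrace_A_def ..
  then show ?thesis by (simp add: ptrace_A_proj[OF e k] ftrace_proj_onb[OF e k] right_diff_distrib)
qed

lemma mu_G_mu:
  assumes e: "onb m e" and k: "k < m"
  shows "(\<Sum>i<m\<^sup>2 - 1. \<Sum>i'<m\<^sup>2 - 1.
            complex_of_real (mu_vec m lamA (e k) i * Gmat m n lamA lamB \<rho> i i' * mu_vec m lamA (e k) i'))
       = of_nat m ^ 2 * of_nat n / 2 *
           tr_prod n (\<lambda>b d. cond_state e k b d - 1 / of_nat m * reduced_B b d)
                     (\<lambda>b d. cond_state e k b d - 1 / of_nat m * reduced_B b d)"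
proof -
  let ?C = "of_nat m ^ 2 * of_nat n / 4 :: complex" and ?I = "{..<m\<^sup>2 - 1}"
  let ?u = "\<lambda>i. tr_prod m (curry (($$) (lamA i))) (curry (($$) (proj (e k))))"
  have half: "complex_of_real (sqrt 2 / 2) * complex_of_real (sqrt 2 / 2) = 1 / 2"
    unfolding of_real_mult[symmetric] by simp
  have "(\<Sum>i\<in>?I. \<Sum>i'\<in>?I. complex_of_real (mu_vec m lamA (e k) i * Gmat m n lamA lamB \<rho> i i' * mu_vec m lamA (e k) i'))
      = (\<Sum>i\<in>?I. \<Sum>i'\<in>?I. ?C / 2 * (?u i * ?u i' * tr_prod n (gen_block i) (gen_block i')))"
  proof (intro sum.cong refl)
    fix i i' assume "i \<in> ?I" "i' \<in> ?I"
    then show "complex_of_real (mu_vec m lamA (e k) i * Gmat m n lamA lamB \<rho> i i' * mu_vec m lamA (e k) i')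
        = ?C / 2 * (?u i * ?u i' * tr_prod n (gen_block i) (gen_block i'))"
      using half by (simp add: mu_vec_eq[OF e k] Gmat_eq)
  qed
  also have "\<dots> = ?C / 2 * tr_prod n (\<lambda>b d. \<Sum>i\<in>?I. ?u i * gen_block i b d) (\<lambda>b d. \<Sum>i\<in>?I. ?u i * gen_block i b d)"
    by (simp only: sum_distrib_left[symmetric] tr_prod_bilinear)
  also have "\<dots> = ?C / 2 * tr_prod n (\<lambda>b d. 2 * (cond_state e k b d - 1 / of_nat m * reduced_B b d))
                                 (\<lambda>b d. 2 * (cond_state e k b d - 1 / of_nat m * reduced_B b d))"
    by (simp only: gen_block_expansion[OF e k])
  finally show ?thesis by (simp only: tr_prod_scale) simp
qed

lemma sum_tr_prod_centered:
  assumes e: "onb m e"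
  shows "(\<Sum>k<m. tr_prod n (\<lambda>b d. cond_state e k b d - 1 / of_nat m * reduced_B b d)
                            (\<lambda>b d. cond_state e k b d - 1 / of_nat m * reduced_B b d))
       = (\<Sum>k<m. tr_prod n (cond_state e k) (cond_state e k)) - 1 / of_nat m * tr_prod n reduced_B reduced_B"
proof -
  let ?c = "1 / of_nat m :: complex"
  have "(\<Sum>k<m. tr_prod n (\<lambda>b d. cond_state e k b d - ?c * reduced_B b d)
                          (\<lambda>b d. cond_state e k b d - ?c * reduced_B b d))
      = (\<Sum>k<m. tr_prod n (cond_state e k) (cond_state e k) - 2 * ?c * tr_prod n reduced_B (cond_state e k)
                 + ?c\<^sup>2 * tr_prod n reduced_B reduced_B)"
    by (simp only: tr_prod_diff_square)
  also have "\<dots> = (\<Sum>k<m. tr_prod n (cond_state e k) (cond_state e k))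
      - 2 * ?c * (\<Sum>k<m. tr_prod n reduced_B (cond_state e k)) + of_nat m * (?c\<^sup>2 * tr_prod n reduced_B reduced_B)"
    by (simp add: sum.distrib sum_subtractf sum_distrib_left)
  also have "(\<Sum>k<m. tr_prod n reduced_B (cond_state e k)) = tr_prod n reduced_B reduced_B"
    unfolding tr_prod_sum_right by (simp only: sum_cond_state[OF e])
  finally show ?thesis using m_pos by (simp add: field_simps power2_eq_square)
qed

lemma G_form_cq_distance:
  assumes e: "onb m e"
  shows "2 / (real m ^ 2 * real n) * ((\<Sum>i<m\<^sup>2 - 1. Gmat m n lamA lamB \<rho> i i)
      - (\<Sum>k<m. \<Sum>i<m\<^sup>2 - 1. \<Sum>i'<m\<^sup>2 - 1. mu_vec m lamA (e k) i * Gmat m n lamA lamB \<rho> i i' * mu_vec m lamA (e k) i'))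
    = cq_distance e"
proof -
  let ?Z = "\<lambda>k b d. cond_state e k b d - 1 / of_nat m * reduced_B b d"
  let ?rr = "tr_prod (m*n) (curry (($$) \<rho>)) (curry (($$) \<rho>))" and ?BB = "tr_prod n reduced_B reduced_B"
  have t: "complex_of_real (\<Sum>i<m\<^sup>2 - 1. Gmat m n lamA lamB \<rho> i i)
      = of_nat m ^ 2 * of_nat n / 4 * (2 * ?rr - 2 / of_nat m * ?BB)"
    unfolding of_real_sum by (rule trace_Gmat)
  have g: "complex_of_real (\<Sum>k<m. \<Sum>i<m\<^sup>2 - 1. \<Sum>i'<m\<^sup>2 - 1.
        mu_vec m lamA (e k) i * Gmat m n lamA lamB \<rho> i i' * mu_vec m lamA (e k) i')
      = of_nat m ^ 2 * of_nat n / 2 * ((\<Sum>k<m. tr_prod n (cond_state e k) (cond_state e k)) - 1 / of_nat m * ?BB)"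
    unfolding of_real_sum sum_tr_prod_centered[OF e, symmetric] sum_distrib_left
    by (rule sum.cong[OF refl], rule mu_G_mu[OF e]) simp
  have "complex_of_real (2 / (real m ^ 2 * real n) * ((\<Sum>i<m\<^sup>2 - 1. Gmat m n lamA lamB \<rho> i i)
      - (\<Sum>k<m. \<Sum>i<m\<^sup>2 - 1. \<Sum>i'<m\<^sup>2 - 1. mu_vec m lamA (e k) i * Gmat m n lamA lamB \<rho> i i' * mu_vec m lamA (e k) i')))
    = 2 / (of_nat m ^ 2 * of_nat n) * (complex_of_real (\<Sum>i<m\<^sup>2 - 1. Gmat m n lamA lamB \<rho> i i)
      - complex_of_real (\<Sum>k<m. \<Sum>i<m\<^sup>2 - 1. \<Sum>i'<m\<^sup>2 - 1.
          mu_vec m lamA (e k) i * Gmat m n lamA lamB \<rho> i i' * mu_vec m lamA (e k) i'))"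
    by (simp only: of_real_mult of_real_diff of_real_divide of_real_power of_real_of_nat_eq of_real_numeral)
  also have "\<dots> = ?rr - (\<Sum>k<m. tr_prod n (cond_state e k) (cond_state e k))"
    unfolding t g using m_pos n_pos by (simp add: field_simps power2_eq_square)
  finally have "Re (complex_of_real (2 / (real m ^ 2 * real n) * ((\<Sum>i<m\<^sup>2 - 1. Gmat m n lamA lamB \<rho> i i)
      - (\<Sum>k<m. \<Sum>i<m\<^sup>2 - 1. \<Sum>i'<m\<^sup>2 - 1. mu_vec m lamA (e k) i * Gmat m n lamA lamB \<rho> i i' * mu_vec m lamA (e k) i'))))
    = cq_distance e"
    unfolding cq_distance_def by (rule arg_cong)
  then show ?thesis by (simp only: Re_complex_of_real)
qed

end
section \<open>The geometric discord\<close>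

lemma Inf_eq_affine_Sup:
  fixes f g :: "'a \<Rightarrow> real" and S :: "real set"
  assumes K: "0 < K" and ex: "\<exists>x. P x"
    and fg: "\<And>x. P x \<Longrightarrow> f x = K * (c - g x)"
    and attained: "\<And>x. P x \<Longrightarrow> f x \<in> S"
    and below: "\<And>s. s \<in> S \<Longrightarrow> \<exists>x. P x \<and> f x \<le> s"
    and nonneg: "\<And>s. s \<in> S \<Longrightarrow> 0 \<le> s"
  shows "Inf S = K * (c - Sup {g x | x. P x})"
proof -
  let ?T = "{g x | x. P x}"
  have S_ne: "S \<noteq> {}" and T_ne: "?T \<noteq> {}" using ex attained by blast+
  have S_bdd: "bdd_below S" using nonneg by (intro bdd_belowI) auto
  have "g x \<le> c" if "P x" for x
    using nonneg[OF attained[OF that]] fg[OF that] K by (simp add: zero_le_mult_iff)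
  then have T_bdd: "bdd_above ?T" by (intro bdd_aboveI) auto
  show ?thesis
  proof (rule antisym)
    have "Sup ?T \<le> c - Inf S / K"
    proof (rule cSup_least[OF T_ne])
      fix t assume "t \<in> ?T"
      then obtain x where x: "P x" and t: "t = g x" by blast
      have "Inf S \<le> K * (c - g x)" using cInf_lower[OF attained[OF x] S_bdd] fg[OF x] by simp
      then show "t \<le> c - Inf S / K" using K t by (simp add: field_simps)
    qed
    then show "Inf S \<le> K * (c - Sup ?T)" using K by (simp add: field_simps)
  next
    show "K * (c - Sup ?T) \<le> Inf S"
    proof (rule cInf_greatest[OF S_ne])
      fix s assume "s \<in> S"
      then obtain x where x: "P x" and le: "f x \<le> s" using below by blast
      have "g x \<le> Sup ?T" using T_bdd x by (intro cSup_upper) auto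
      then show "K * (c - Sup ?T) \<le> s" using K le fg[OF x] by (smt (verit) mult_left_mono)
    qed
  qed
qed

theorem mainTheorem6:
  fixes m n :: nat and lamA lamB :: "nat \<Rightarrow> complex mat" and \<rho> :: "complex mat"
  assumes "0 < m" and "0 < n"
    and "su_generators m lamA" and "su_generators n lamB"
    and "density_mat (m * n) \<rho>"
  shows "geometric_discord m n \<rho> =
     2 / (real m ^ 2 * real n) *
       ((\<Sum>i < m^2 - 1. Gmat m n lamA lamB \<rho> i i)
        - Sup {(\<Sum>k<m. \<Sum>i < m^2 - 1. \<Sum>i' < m^2 - 1.
                  mu_vec m lamA (e k) i * Gmat m n lamA lamB \<rho> i i' * mu_vec m lamA (e k) i')
               | e. onb m e})"
proof -
  interpret su_bipartite_state m n \<rho> lamA lamB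
    using assms by unfold_locales
  show ?thesis unfolding geometric_discord_def
  proof (rule Inf_eq_affine_Sup[where f = cq_distance and P = "onb m"])
    show "0 < 2 / (real m ^ 2 * real n)" using assms(1,2) by simp
    show "\<exists>e. onb m e" using onb_unit_vec by blast
  next
    fix e assume "onb m e"
    then show "cq_distance e = 2 / (real m ^ 2 * real n) * ((\<Sum>i < m^2 - 1. Gmat m n lamA lamB \<rho> i i)
        - (\<Sum>k<m. \<Sum>i < m^2 - 1. \<Sum>i' < m^2 - 1.
             mu_vec m lamA (e k) i * Gmat m n lamA lamB \<rho> i i' * mu_vec m lamA (e k) i'))"
      by (rule G_form_cq_distance[symmetric])
    show "cq_distance e \<in> {Re (mtrace ((\<rho> - \<chi>) * (\<rho> - \<chi>))) | \<chi>. zero_discord m n \<chi>}"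
      using distance_attained[OF \<open>onb m e\<close>] by force
  next
    fix s assume "s \<in> {Re (mtrace ((\<rho> - \<chi>) * (\<rho> - \<chi>))) | \<chi>. zero_discord m n \<chi>}"
    then obtain \<chi> where "zero_discord m n \<chi>" and s: "s = Re (mtrace ((\<rho> - \<chi>) * (\<rho> - \<chi>)))" by blast
    then show "\<exists>e. onb m e \<and> cq_distance e \<le> s" and "0 \<le> s"
      using distance_lower_bound distance_nonneg by auto
  qed
qed

end
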